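(* In the linear mixture MDP setting with Algorithm 1 as described in the context, with probability at least $1-\delta/2$, for all $k\in[K]$ and $h\in[H]$, $$\|\hat\theta_{k,h}-\theta_h\|_{\Lambda_{k,h}}\le\beta.$$
   Context: Episodic MDP with state set $\mathcal{S}$, action set $\mathcal{A}$, horizon $H$, transitions $P_h(\cdot|s,a)$, fixed initial state $s_1$. Linear mixture MDP: known $\phi:\mathcal{S}\times\mathcal{A}\times\mathcal{S}\to\mathbb{R}^d$ with $\|\sum_{s'}\phi(s,a,s')V(s')\|_2\le1$ for all $V:\mathcal{S}\to[0,1]$, and unknown $\theta_h$, $\|\theta_h\|_2\le B$, with $P_h(s'|s,a)=\theta_h^\top\phi(s,a,s')$. $\|x\|_M=\sqrt{x^\top Mx}$. Algorithm 1 (run for $K$ episodes, failure probability $\delta$): $\lambda=B^{-2}$, $\beta=H\sqrt{d\log(4H^3K\lambda^{-1}\delta^{-1})}+\sqrt\lambda B$, $\mathcal{V}=\{V:\mathcal{S}\to[0,H]\}$. For $k=1,\dots,K$: $V_{k,H+1}\equiv0$; for $h=H,\dots,1$: $\Lambda_{k,h}=\sum_{t<k}\phi_{t,h}(s_{t,h},a_{t,h})\phi_{t,h}(s_{t,h},a_{t,h})^\top+\lambda I$; $\hat\theta_{k,h}=\Lambda_{k,h}^{-1}\sum_{t<k}\phi_{t,h}(s_{t,h},a_{t,h})\tilde V_{t,h+1,s_{t,h},a_{t,h}}(s_{t,h+1})$; $\tilde V_{k,h+1,s,a}\in\arg\max_{V\in\mathcal{V}}\|\sum_{s'}\phi(s,a,s')V(s')\|_{\Lambda_{k,h}^{-1}}$;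 $\phi_{k,h}(s,a)=\sum_{s'}\phi(s,a,s')\tilde V_{k,h+1,s,a}(s')$; $u_{k,h}(s,a)=\beta\|\phi_{k,h}(s,a)\|_{\Lambda_{k,h}^{-1}}$; $Q_{k,h}(s,a)=\min\{\hat\theta_{k,h}^\top\sum_{s'}\phi(s,a,s')V_{k,h+1}(s')+2u_{k,h}(s,a),H\}$; $V_{k,h}(s)=\max_aQ_{k,h}(s,a)$, $\pi_{k,h}(s)\in\arg\max_aQ_{k,h}(s,a)$. Then $\pi_k$ is executed from $s_1$, producing $s_{k,h+1}\sim P_h(\cdot|s_{k,h},a_{k,h})$, $a_{k,h}=\pi_{k,h}(s_{k,h})$. *)

theory Defs
  imports "HOL-Analysis.Analysis" "HOL-Probability.Probability"
begin

(* A trajectory of one episode: states s_h (h = 1..H+1) and actions a_h (h = 1..H). *)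
type_synonym ('s,'a) traj = "(nat \<Rightarrow> 's) \<times> (nat \<Rightarrow> 'a)"

definition mnorm :: "real^'d^'d \<Rightarrow> real^'d \<Rightarrow> real" where
  "mnorm M x = sqrt (x \<bullet> (M *v x))"

definition outer :: "real^'d \<Rightarrow> real^'d^'d" where
  "outer x = (\<chi> i j. x$i * x$j)"

definition feat :: "('s::finite \<Rightarrow> 'a \<Rightarrow> 's \<Rightarrow> real^'d) \<Rightarrow> 's \<Rightarrow> 'a \<Rightarrow> ('s \<Rightarrow> real) \<Rightarrow> real^'d" where
  "feat \<phi> s a V = (\<Sum>s'\<in>UNIV. V s' *\<^sub>R \<phi> s a s')"

definition Vset :: "nat \<Rightarrow> ('s \<Rightarrow> real) set" where
  "Vset H = {V. \<forall>s. 0 \<le> V s \<and> V s \<le> real H}"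

definition trans :: "(nat \<Rightarrow> real^'d) \<Rightarrow> ('s \<Rightarrow> 'a \<Rightarrow> 's \<Rightarrow> real^'d) \<Rightarrow> nat \<Rightarrow> 's \<Rightarrow> 'a \<Rightarrow> 's pmf" where
  "trans \<theta> \<phi> h s a = embed_pmf (\<lambda>s'. \<theta> h \<bullet> \<phi> s a s')"

definition LamOf :: "real \<Rightarrow> ((real^'d) \<times> real) list \<Rightarrow> real^'d^'d" where
  "LamOf lam D = lam *\<^sub>R mat 1 + sum_list (map (\<lambda>(x,y). outer x) D)"

(* data phi lam selV hist h n: list of regression pairs
   (phi_{t,h}(s_{t,h},a_{t,h}), Vtilde_{t,h+1,s_{t,h},a_{t,h}}(s_{t,h+1})) for t = 1..n,
   where episode t is hist ! (t-1), and selV t h Lambda_{t,h} s a is the chosen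
   maximiser Vtilde_{t,h+1,s,a}. *)
primrec data :: "('s::finite \<Rightarrow> 'a \<Rightarrow> 's \<Rightarrow> real^'d) \<Rightarrow> real
    \<Rightarrow> (nat \<Rightarrow> nat \<Rightarrow> real^'d^'d \<Rightarrow> 's \<Rightarrow> 'a \<Rightarrow> ('s \<Rightarrow> real))
    \<Rightarrow> ('s,'a) traj list \<Rightarrow> nat \<Rightarrow> nat \<Rightarrow> ((real^'d) \<times> real) list" where
  "data \<phi> lam selV hist h 0 = []"
| "data \<phi> lam selV hist h (Suc n) =
     (let D = data \<phi> lam selV hist h n; S = fst (hist ! n); A = snd (hist ! n);
          V = selV (Suc n) h (LamOf lam D) (S h) (A h)
      in D @ [(feat \<phi> (S h) (A h) V, V (S (Suc h)))])"

definition Lam where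
  "Lam \<phi> lam selV hist k h = LamOf lam (data \<phi> lam selV hist h (k - 1))"

definition thetahat where
  "thetahat \<phi> lam selV hist k h =
     matrix_inv (Lam \<phi> lam selV hist k h) *v
       sum_list (map (\<lambda>(x,y). y *\<^sub>R x) (data \<phi> lam selV hist h (k - 1)))"

(* Q_{k,h}(s,a) given V_{k,h+1} = Vn *)
definition Qfun where
  "Qfun \<phi> (H::nat) lam \<beta> selV hist k h Vn s a =
     (let L = Lam \<phi> lam selV hist k h;
          u = \<beta> * mnorm (matrix_inv L) (feat \<phi> s a (selV k h L s a))
      in min (thetahat \<phi> lam selV hist k h \<bullet> feat \<phi> s a Vn + 2 * u) (real H))"

(* Vb ... k n = V_{k,H+1-n} *)
primrec Vb where
  "Vb \<phi> H lam \<beta> selV hist k 0 = (\<lambda>s. 0)"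
| "Vb \<phi> H lam \<beta> selV hist k (Suc n) =
     (\<lambda>s. Max (range (Qfun \<phi> H lam \<beta> selV hist k (H - n) (Vb \<phi> H lam \<beta> selV hist k n) s)))"

(* pi_{k,h}(s): the action chosen by the tie-breaking rule selA among maximisers of Q_{k,h}(s,.) *)
definition pol where
  "pol \<phi> H lam \<beta> selV selA hist k h s =
     selA k h (Qfun \<phi> H lam \<beta> selV hist k h (Vb \<phi> H lam \<beta> selV hist k (H - h)) s)"

primrec steps :: "(nat \<Rightarrow> 's \<Rightarrow> 'a \<Rightarrow> 's pmf) \<Rightarrow> (nat \<Rightarrow> 's \<Rightarrow> 'a) \<Rightarrow> nat \<Rightarrow> 's \<Rightarrow> nat
    \<Rightarrow> ('s,'a) traj pmf" where
  "steps P \<pi> h s 0 = return_pmf (\<lambda>_. s, \<lambda>_. \<pi> h s)"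
| "steps P \<pi> h s (Suc n) =
     bind_pmf (P h s (\<pi> h s))
       (\<lambda>s'. map_pmf (\<lambda>(S,A). (S(h := s), A(h := \<pi> h s))) (steps P \<pi> (Suc h) s' n))"

primrec run where
  "run \<theta> \<phi> H lam \<beta> selV selA s1 0 = return_pmf []"
| "run \<theta> \<phi> H lam \<beta> selV selA s1 (Suc k) =
     bind_pmf (run \<theta> \<phi> H lam \<beta> selV selA s1 k)
       (\<lambda>hist. map_pmf (\<lambda>\<tau>. hist @ [\<tau>])
          (steps (trans \<theta> \<phi>) (pol \<phi> H lam \<beta> selV selA hist (Suc k)) 1 s1 H))"

end

theory Submission
  imports Defs
begin

text \<open>Fix a step \<open>h\<close>. Let \<open>S\<close> be the noise sum of the regression data (the features \<open>x\<close>
  weighted by the responses minus their conditional means \<open>\<theta>\<^sub>h \<bullet> x\<close>) and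
  \<open>\<Lambda> = lam I + \<Sum> x x\<^sup>T\<close>. The ridge error is \<open>\<Lambda>\<^sup>-\<^sup>1 (S - lam \<theta>\<^sub>h)\<close>, so its \<open>\<Lambda>\<close>-norm is at
  most the \<open>\<Lambda>\<^sup>-\<^sup>1\<close>-norm of \<open>S\<close> plus \<open>sqrt lam * norm \<theta>\<^sub>h\<close>. The responses lie in \<open>[0, H]\<close>,
  so Hoeffding's lemma together with the Sherman-Morrison formula and the matrix determinant
  lemma makes \<open>exp (2 / H\<^sup>2 * (S \<bullet> \<Lambda>\<^sup>-\<^sup>1 S - H\<^sup>2 * ln (det \<Lambda> / lam\<^sup>d)))\<close> a supermartingale
  starting at 1. By Ville's maximal inequality it ever reaches \<open>2 H / \<delta>\<close> with probability at
  most \<open>\<delta> / (2 H)\<close>, and a union bound over \<open>h\<close> costs \<open>\<delta> / 2\<close>. Off this event, Hadamard's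
  inequality bounds \<open>ln (det \<Lambda> / lam\<^sup>d)\<close> by \<open>d * ln (1 + K H\<^sup>2 / lam)\<close>, which yields \<open>\<beta>\<close>.\<close>

section \<open>Symmetric positive definite matrices\<close>

definition outer_prod :: "real^'n \<Rightarrow> real^'n \<Rightarrow> real^'n^'n" where
  "outer_prod u v = (\<chi> i j. u$i * v$j)"

definition pos_def :: "real^'n^'n \<Rightarrow> bool" where
  "pos_def A \<longleftrightarrow> (\<forall>x. x \<noteq> 0 \<longrightarrow> 0 < x \<bullet> (A *v x))"

definition symmetric_matrix :: "real^'n^'n \<Rightarrow> bool" where
  "symmetric_matrix A \<longleftrightarrow> transpose A = A"

lemma det_identity_replace_row:
  fixes v :: "real^'n"
  shows "det (\<chi> i. if i = j then v else axis i 1 :: real^'n^'n) = v$j"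
proof -
  have rows: "\<And>i. row i (mat 1 :: real^'n^'n) = axis i 1"
    by (auto simp: row_def mat_def axis_def vec_eq_iff)
  show ?thesis
    using cramer_lemma_transpose[of j v "mat 1 :: real^'n^'n"] unfolding rows basis_expansion by simp
qed

lemma det_identity_replace_row_plus_multiples:
  fixes u v :: "real^'n"
  assumes "finite S" "j \<notin> S"
  shows "det (\<chi> i. if i = j then v else if i \<in> S then axis i 1 + u$i *s v else axis i 1
               :: real^'n^'n) = v$j"
  using assms
proof (induction S rule: finite_induct)
  case empty
  then show ?case using det_identity_replace_row[of j v] by (simp cong: if_cong)
next
  case (insert m S)
  define A :: "real^'n^'n"
    where "A = (\<chi> i. if i = j then v else if i \<in> S then axis i 1 + u$i *s v else axis i 1)"
  have "m \<noteq> j" using insert.prems by auto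
  have "(\<chi> i. if i = j then v else if i \<in> insert m S then axis i 1 + u$i *s v else axis i 1
          :: real^'n^'n) = (\<chi> k. if k = m then row m A + u$m *s row j A else row k A)"
    using insert.hyps \<open>m \<noteq> j\<close> by (auto simp: A_def row_def vec_eq_iff)
  then show ?case
    using det_row_operation[OF \<open>m \<noteq> j\<close>, of A "u$m"] insert.IH insert.prems by (simp add: A_def)
qed

lemma det_identity_plus_outer_rows:
  fixes u v :: "real^'n"
  assumes "finite S"
  shows "det (\<chi> i. if i \<in> S then axis i 1 + u$i *s v else axis i 1 :: real^'n^'n)
           = 1 + (\<Sum>i\<in>S. u$i * v$i)"
  using assms
proof (induction S rule: finite_induct)
  case empty
  have "(\<chi> i. axis i 1 :: real^'n^'n) = mat 1" by (auto simp: vec_eq_iff axis_def mat_def)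
  then show ?case by simp
next
  case (insert m S)
  define A :: "real^'n^'n" where "A = (\<chi> i. if i \<in> S then axis i 1 + u$i *s v else axis i 1)"
  have "(\<chi> i. if i \<in> insert m S then axis i 1 + u$i *s v else axis i 1 :: real^'n^'n)
      = (\<chi> k. if k = m then row m A + u$m *s v else row k A)"
    using insert.hyps by (auto simp: A_def row_def vec_eq_iff)
  moreover have "(\<chi> k. if k = m then row m A else row k A) = A"
    by (simp add: row_def vec_eq_iff)
  moreover have "(\<chi> k. if k = m then v else row k A)
      = (\<chi> i. if i = m then v else if i \<in> S then axis i 1 + u$i *s v else axis i 1)"
    by (auto simp: A_def row_def vec_eq_iff)
  ultimately show ?case
    using insert det_identity_replace_row_plus_multiples[OF insert.hyps, of v u]
    by (simp add: det_row_add det_row_mul A_def)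
qed

lemma det_identity_plus_outer_prod: "det (mat 1 + outer_prod u v :: real^'n^'n) = 1 + v \<bullet> u"
proof -
  have "(mat 1 + outer_prod u v :: real^'n^'n)
      = (\<chi> i. if i \<in> UNIV then axis i 1 + u$i *s v else axis i 1)"
    by (auto simp: vec_eq_iff outer_prod_def mat_def axis_def)
  then show ?thesis
    using det_identity_plus_outer_rows[of UNIV u v] by (simp add: inner_vec_def mult.commute)
qed

lemma matrix_inv_mult:
  assumes "invertible (A::real^'n^'n)"
  shows "A ** matrix_inv A = mat 1" "matrix_inv A ** A = mat 1"
proof -
  have "\<exists>A'. A ** A' = mat 1 \<and> A' ** A = mat 1" using assms by (simp add: invertible_def)
  then have "A ** matrix_inv A = mat 1 \<and> matrix_inv A ** A = mat 1"
    unfolding matrix_inv_def by (rule someI_ex)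
  then show "A ** matrix_inv A = mat 1" "matrix_inv A ** A = mat 1" by auto
qed

lemma matrix_inv_mult_vector:
  assumes "invertible (A::real^'n^'n)"
  shows "A *v (matrix_inv A *v x) = x" "matrix_inv A *v (A *v x) = x"
  using matrix_inv_mult[OF assms] by (simp_all add: matrix_vector_mul_assoc)

lemma pos_def_invertible:
  assumes "pos_def (A::real^'n^'n)"
  shows "invertible A"
proof -
  have "\<forall>x. A *v x = 0 \<longrightarrow> x = 0"
    using assms unfolding pos_def_def by (metis inner_zero_right less_irrefl)
  then show ?thesis by (simp add: invertible_left_inverse matrix_left_invertible_ker)
qed

lemma symmetric_matrix_inner:
  assumes "symmetric_matrix A"
  shows "x \<bullet> ((A::real^'n^'n) *v y) = (A *v x) \<bullet> y"
  using assms transpose_matrix_vector[of A x] by (simp add: dot_lmul_matrix symmetric_matrix_def)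

lemma symmetric_matrix_iff_inner:
  "symmetric_matrix (A::real^'n^'n) \<longleftrightarrow> (\<forall>x y. x \<bullet> (A *v y) = (A *v x) \<bullet> y)"
proof
  assume "\<forall>x y. x \<bullet> (A *v y) = (A *v x) \<bullet> y"
  then have "axis j 1 \<bullet> (A *v axis i 1) = (A *v axis j 1) \<bullet> axis i 1" for i j
    by blast
  then have "A$j$i = A$i$j" for i j
    by (simp add: inner_axis inner_axis' matrix_vector_mult_basis column_def)
  then show "symmetric_matrix A" by (simp add: symmetric_matrix_def transpose_def vec_eq_iff)
qed (use symmetric_matrix_inner in blast)

lemma symmetric_matrix_inv:
  assumes "symmetric_matrix A" "invertible (A::real^'n^'n)"
  shows "symmetric_matrix (matrix_inv A)"
  unfolding symmetric_matrix_iff_inner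
proof (intro allI)
  fix x y :: "real^'n"
  have "x \<bullet> (matrix_inv A *v y) = (A *v (matrix_inv A *v x)) \<bullet> (matrix_inv A *v y)"
    using matrix_inv_mult_vector[OF assms(2)] by simp
  also have "\<dots> = (matrix_inv A *v x) \<bullet> (A *v (matrix_inv A *v y))"
    using symmetric_matrix_inner[OF assms(1)] by simp
  also have "\<dots> = (matrix_inv A *v x) \<bullet> y" using matrix_inv_mult_vector[OF assms(2)] by simp
  finally show "x \<bullet> (matrix_inv A *v y) = (matrix_inv A *v x) \<bullet> y" .
qed

lemma symmetric_matrix_add: "symmetric_matrix A \<Longrightarrow> symmetric_matrix B \<Longrightarrow> symmetric_matrix (A + B)"
  by (simp add: symmetric_matrix_def transpose_def vec_eq_iff)

lemma symmetric_matrix_scaled_identity: "symmetric_matrix (c *\<^sub>R mat 1 :: real^'n^'n)"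
  by (simp add: symmetric_matrix_def transpose_def vec_eq_iff mat_def)

lemma symmetric_matrix_outer: "symmetric_matrix (outer x)"
  by (simp add: symmetric_matrix_def outer_def transpose_def vec_eq_iff mult.commute)

lemma outer_mult_vector: "outer x *v y = (x \<bullet> y) *\<^sub>R x"
  by (simp add: outer_def matrix_vector_mult_def vec_eq_iff inner_vec_def sum_distrib_left
      mult.commute mult.left_commute)

lemma inner_outer_mult_vector: "z \<bullet> (outer x *v z) = (x \<bullet> z)\<^sup>2"
  by (simp add: outer_mult_vector power2_eq_square inner_commute)

lemma pos_def_inv_nonneg:
  assumes "pos_def A"
  shows "0 \<le> x \<bullet> (matrix_inv A *v x)"
proof -
  define y where "y = matrix_inv A *v x"
  have "x = A *v y" using matrix_inv_mult_vector[OF pos_def_invertible[OF assms]] by (simp add: y_def)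
  then have "x \<bullet> (matrix_inv A *v x) = y \<bullet> (A *v y)" by (simp add: y_def inner_commute)
  then show ?thesis using assms unfolding pos_def_def by (cases "y = 0") (auto intro: less_imp_le)
qed

text \<open>Matrix determinant lemma: \<open>V + x x\<^sup>T = V (I + V\<^sup>-\<^sup>1 x x\<^sup>T)\<close>.\<close>

lemma det_add_outer:
  assumes "invertible (V::real^'n^'n)"
  shows "det (V + outer x) = det V * (1 + x \<bullet> (matrix_inv V *v x))"
proof -
  define u where "u = matrix_inv V *v x"
  have "V *v u = x" using matrix_inv_mult_vector[OF assms] by (simp add: u_def)
  moreover have "(V ** outer_prod u x) $ i $ k = (V *v u)$i * x$k" for i k
    by (simp add: matrix_matrix_mult_def outer_prod_def matrix_vector_mult_def sum_distrib_right
        mult.assoc)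
  ultimately have "V ** outer_prod u x = outer x" by (simp add: vec_eq_iff outer_def)
  then have "V + outer x = V ** (mat 1 + outer_prod u x)" by (simp add: matrix_add_ldistrib)
  then show ?thesis by (simp add: det_mul det_identity_plus_outer_prod u_def)
qed

lemma sherman_morrison:
  assumes sym: "symmetric_matrix V" and inv: "invertible (V::real^'n^'n)"
    and inv': "invertible (V + outer x)"
    and nz: "1 + x \<bullet> (matrix_inv V *v x) \<noteq> 0"
  shows "matrix_inv (V + outer x) *v z = matrix_inv V *v z
           - (((matrix_inv V *v x) \<bullet> z) / (1 + x \<bullet> (matrix_inv V *v x))) *\<^sub>R (matrix_inv V *v x)"
proof -
  define u where "u = matrix_inv V *v x"
  define w where "w = x \<bullet> u"
  define r where "r = matrix_inv V *v z - ((u \<bullet> z) / (1 + w)) *\<^sub>R u"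
  have w1: "1 + w \<noteq> 0" using nz by (simp add: w_def u_def)
  have Vu: "V *v u = x" using matrix_inv_mult_vector[OF inv] by (simp add: u_def)
  have xz: "x \<bullet> (matrix_inv V *v z) = u \<bullet> z"
    using symmetric_matrix_inv[OF sym inv] by (simp add: u_def symmetric_matrix_inner)
  have "(V + outer x) *v r = V *v r + (x \<bullet> r) *\<^sub>R x"
    by (simp add: matrix_vector_mult_add_rdistrib outer_mult_vector)
  also have "V *v r = z - ((u \<bullet> z) / (1 + w)) *\<^sub>R x"
    by (simp add: r_def matrix_vector_mult_diff_distrib matrix_inv_mult_vector[OF inv] Vu
        matrix_vector_mult_scaleR)
  also have "x \<bullet> r = u \<bullet> z - ((u \<bullet> z) / (1 + w)) * w"
    by (simp add: r_def inner_diff_right xz w_def)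
  finally have "(V + outer x) *v r = z + (u \<bullet> z - ((u \<bullet> z) / (1 + w)) * w - (u \<bullet> z) / (1 + w)) *\<^sub>R x"
    by (simp add: algebra_simps)
  also have "u \<bullet> z - ((u \<bullet> z) / (1 + w)) * w - (u \<bullet> z) / (1 + w) = 0"
    using w1 by (simp add: field_simps)
  finally have "(V + outer x) *v r = z" by simp
  then have "matrix_inv (V + outer x) *v z = r"
    using matrix_inv_mult_vector(2)[OF inv', of r] by simp
  then show ?thesis by (simp add: r_def u_def w_def)
qed

lemma quadratic_form_cauchy_schwarz:
  fixes M :: "real^'n^'n"
  assumes sym: "symmetric_matrix M" and psd: "\<And>z. 0 \<le> z \<bullet> (M *v z)"
  shows "(u \<bullet> (M *v v))\<^sup>2 \<le> (u \<bullet> (M *v u)) * (v \<bullet> (M *v v))"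
proof -
  define p where "p = u \<bullet> (M *v u)"
  define q where "q = u \<bullet> (M *v v)"
  define r where "r = v \<bullet> (M *v v)"
  have vu: "v \<bullet> (M *v u) = q" using symmetric_matrix_inner[OF sym, of v u] by (simp add: q_def inner_commute)
  have quad: "0 \<le> p + 2 * t * q + t\<^sup>2 * r" for t
  proof -
    have "0 \<le> (u + t *\<^sub>R v) \<bullet> (M *v (u + t *\<^sub>R v))" by (rule psd)
    also have "\<dots> = p + t * q + t * (v \<bullet> (M *v u)) + t * t * r"
      by (simp add: p_def q_def r_def matrix_vector_right_distrib matrix_vector_mult_scaleR
          inner_add_left inner_add_right algebra_simps)
    finally show ?thesis unfolding vu by (simp add: power2_eq_square algebra_simps)
  qed
  show ?thesis
  proof (cases "r = 0")
    case True
    have "q = 0"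
    proof (rule ccontr)
      assume "q \<noteq> 0"
      have "0 \<le> p + 2 * (- (p + 1) / (2 * q)) * q" using quad[of "- (p + 1) / (2 * q)"] True by simp
      also have "\<dots> = -1" using \<open>q \<noteq> 0\<close> by (simp add: field_simps)
      finally show False by simp
    qed
    then show ?thesis using True by (simp add: q_def[symmetric] p_def[symmetric] r_def[symmetric])
  next
    case False
    then have "0 < r" using psd[of v] by (simp add: r_def)
    have "0 \<le> p + 2 * (- q / r) * q + (- q / r)\<^sup>2 * r" by (rule quad)
    also have "\<dots> = p - q\<^sup>2 / r" using \<open>0 < r\<close> by (simp add: field_simps power2_eq_square)
    finally have "q\<^sup>2 \<le> p * r" using \<open>0 < r\<close> by (simp add: divide_le_eq)
    then show ?thesis by (simp add: p_def q_def r_def)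
  qed
qed

lemma mnorm_triangle:
  fixes M :: "real^'n^'n"
  assumes sym: "symmetric_matrix M" and psd: "\<And>z. 0 \<le> z \<bullet> (M *v z)"
  shows "mnorm M (u + v) \<le> mnorm M u + mnorm M v"
proof -
  have "u \<bullet> (M *v v) \<le> sqrt (u \<bullet> (M *v u)) * sqrt (v \<bullet> (M *v v))"
    using real_sqrt_le_mono[OF quadratic_form_cauchy_schwarz[OF assms, of u v]]
    by (simp add: real_sqrt_mult)
  then have "(u + v) \<bullet> (M *v (u + v)) \<le> (mnorm M u + mnorm M v)\<^sup>2"
    using symmetric_matrix_inner[OF sym, of v u] psd[of u] psd[of v]
    by (simp add: mnorm_def matrix_vector_right_distrib inner_add_left inner_add_right
        power2_eq_square algebra_simps inner_commute)
  then show ?thesis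
    using real_sqrt_le_mono by (fastforce simp: mnorm_def psd)
qed

lemma mnorm_scaleR: "mnorm M (c *\<^sub>R x) = \<bar>c\<bar> * mnorm M x"
proof -
  have "(c *\<^sub>R x) \<bullet> (M *v (c *\<^sub>R x)) = c\<^sup>2 * (x \<bullet> (M *v x))"
    by (simp add: matrix_vector_mult_scaleR power2_eq_square)
  then show ?thesis by (simp add: mnorm_def real_sqrt_mult)
qed

section \<open>Hadamard's inequality\<close>

lemma matrix_add_rdistrib: "((A::real^'n^'m) + B) ** (C::real^'k^'n) = A ** C + B ** C"
  by (vector matrix_matrix_mult_def sum.distrib[symmetric] field_simps)

lemma inner_axis_mult_axis: "axis i 1 \<bullet> ((A::real^'n^'n) *v axis i 1) = A$i$i"
  unfolding inner_axis' matrix_vector_mult_basis by (simp add: column_def)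

lemma pos_def_diag: "pos_def (A::real^'n^'n) \<Longrightarrow> 0 < A$i$i"
  unfolding pos_def_def by (metis inner_axis_mult_axis axis_eq_0_iff zero_neq_one)

lemma symmetric_matrix_entry: "symmetric_matrix (A::real^'n^'n) \<Longrightarrow> A$i$k = A$k$i"
  unfolding symmetric_matrix_def by (metis transpose_def vec_lambda_beta)

text \<open>One step of symmetric Gaussian elimination: the Schur complement of the pivot \<open>A$j$j\<close>,
  with the eliminated row and column replaced by those of the identity.\<close>

definition pivot_elim :: "real^'n^'n \<Rightarrow> 'n \<Rightarrow> real^'n^'n" where
  "pivot_elim A j = A - (1 / A$j$j) *\<^sub>R outer (column j A) + outer (axis j 1)"

lemma pivot_elim_entry:
  "pivot_elim A j $ i $ k = A$i$k - A$i$j * A$k$j / A$j$j + (if i = j \<and> k = j then 1 else 0)"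
  by (simp add: pivot_elim_def outer_def axis_def column_def)

lemma symmetric_pivot_elim: "symmetric_matrix A \<Longrightarrow> symmetric_matrix (pivot_elim A j)"
  by (simp add: symmetric_matrix_def transpose_def vec_eq_iff pivot_elim_entry mult.commute)

lemma pivot_elim_pivot_row:
  assumes "symmetric_matrix A" "pos_def A"
  shows "pivot_elim A j $ j $ k = (if k = j then 1 else 0)"
  using pos_def_diag[OF assms(2), of j] symmetric_matrix_entry[OF assms(1), of k j]
  by (auto simp: pivot_elim_entry)

lemma pivot_elim_diag_le:
  assumes "pos_def A" "i \<noteq> j"
  shows "pivot_elim A j $ i $ i \<le> A$i$i"
  using assms pos_def_diag[OF assms(1), of j] by (simp add: pivot_elim_entry)

lemma pivot_elim_quadratic_form:
  fixes A :: "real^'n^'n" and x :: "real^'n" and j :: 'n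
  assumes "symmetric_matrix A" "pos_def A"
  defines "z \<equiv> x - (column j A \<bullet> x / A$j$j) *\<^sub>R axis j 1"
  shows "x \<bullet> (pivot_elim A j *v x) = z \<bullet> (A *v z) + (x$j)\<^sup>2"
proof -
  define c where "c = column j A"
  define a where "a = A$j$j"
  define e where "e = (axis j 1 :: real^'n)"
  have a0: "0 < a" using pos_def_diag[OF assms(2)] by (simp add: a_def)
  have Ae: "A *v e = c" by (simp add: e_def c_def matrix_vector_mult_basis)
  have eAx: "e \<bullet> (A *v x) = c \<bullet> x" using symmetric_matrix_inner[OF assms(1), of e x] Ae by simp
  have xAe: "x \<bullet> (A *v e) = c \<bullet> x" using Ae by (simp add: inner_commute)
  have eAe: "e \<bullet> (A *v e) = a" using inner_axis_mult_axis[of j A] by (simp add: e_def a_def)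
  have "pivot_elim A j *v x = A *v x - (1/a) *\<^sub>R ((c \<bullet> x) *\<^sub>R c) + (e \<bullet> x) *\<^sub>R e"
    unfolding pivot_elim_def c_def[symmetric] a_def[symmetric] e_def[symmetric]
    by (simp only: matrix_vector_mult_add_rdistrib matrix_vector_mult_diff_rdistrib
        scaleR_matrix_vector_assoc[symmetric] outer_mult_vector)
  then have "x \<bullet> (pivot_elim A j *v x) = x \<bullet> (A *v x) - (c \<bullet> x)\<^sup>2 / a + (x$j)\<^sup>2"
    by (simp add: inner_add_right inner_diff_right e_def inner_axis inner_commute power2_eq_square)
  moreover have "z \<bullet> (A *v z) = x \<bullet> (A *v x) - (c \<bullet> x)\<^sup>2 / a"
  proof -
    have "z \<bullet> (A *v z) = x \<bullet> (A *v x) - ((c \<bullet> x) / a) * (x \<bullet> (A *v e)) - ((c \<bullet> x) / a) * (e \<bullet> (A *v x))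
         + ((c \<bullet> x) / a) * ((c \<bullet> x) / a) * (e \<bullet> (A *v e))"
      by (simp add: z_def c_def a_def e_def matrix_vector_mult_diff_distrib matrix_vector_mult_scaleR
          inner_diff_left inner_diff_right algebra_simps)
    also have "\<dots> = x \<bullet> (A *v x) - (c \<bullet> x)\<^sup>2 / a"
      using a0 unfolding xAe eAx eAe by (simp add: field_simps power2_eq_square)
    finally show ?thesis .
  qed
  ultimately show ?thesis by simp
qed

lemma pos_def_pivot_elim:
  assumes "symmetric_matrix A" "pos_def (A::real^'n^'n)"
  shows "pos_def (pivot_elim A j)"
  unfolding pos_def_def
proof (intro allI impI)
  fix x :: "real^'n"
  assume "x \<noteq> 0"
  define t where "t = column j A \<bullet> x / A$j$j"
  define z where "z = x - t *\<^sub>R axis j 1"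
  have q: "x \<bullet> (pivot_elim A j *v x) = z \<bullet> (A *v z) + (x$j)\<^sup>2"
    using pivot_elim_quadratic_form[OF assms] by (simp add: z_def t_def)
  show "0 < x \<bullet> (pivot_elim A j *v x)"
  proof (cases "z = 0")
    case True
    then have "x = t *\<^sub>R axis j 1" by (simp add: z_def)
    with \<open>x \<noteq> 0\<close> have "x$j \<noteq> 0" by auto
    then show ?thesis using q True by simp
  next
    case False
    then have "0 < z \<bullet> (A *v z)" using assms(2) by (simp add: pos_def_def)
    then show ?thesis using q by (simp add: add_pos_nonneg)
  qed
qed

lemma det_pivot_elim:
  fixes A :: "real^'n^'n"
  assumes "symmetric_matrix A" "pos_def A"
  shows "det A = A$j$j * det (pivot_elim A j)"
proof -
  define a where "a = A$j$j"
  define e where "e = (axis j 1 :: real^'n)"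
  define u where "u = (- (1/a)) *\<^sub>R (column j A - a *\<^sub>R e)"
  define L where "L = mat 1 + outer_prod u e"
  define r where "r = row j A - a *s e"
  have a0: "0 < a" using pos_def_diag[OF assms(2)] by (simp add: a_def)
  have detL: "det L = 1"
    unfolding L_def det_identity_plus_outer_prod e_def inner_axis'
    using a0 by (simp add: u_def column_def a_def e_def)
  have "(L ** A) $ i $ k = (if i = j then a *s e + r else row i (pivot_elim A j)) $ k" for i k
  proof -
    have "(outer_prod u e ** A) $ i $ k = (\<Sum>m\<in>UNIV. u$i * (if m = j then 1 else 0) * A$m$k)"
      by (simp add: matrix_matrix_mult_def outer_prod_def e_def axis_def)
    also have "\<dots> = (\<Sum>m\<in>UNIV. if m = j then u$i * A$j$k else 0)"
      by (rule sum.cong) auto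
    finally have "(L ** A) $ i $ k = A$i$k + u$i * A$j$k"
      by (simp add: L_def matrix_add_rdistrib)
    also have "\<dots> = (if i = j then a *s e + r else row i (pivot_elim A j)) $ k"
    proof (cases "i = j")
      case True
      then show ?thesis by (simp add: u_def column_def e_def row_def a_def r_def)
    next
      case False
      then have "u$i = - (A$i$j / a)" by (simp add: u_def column_def e_def axis_def)
      then show ?thesis using False symmetric_matrix_entry[OF assms(1), of j k]
        by (simp add: row_def pivot_elim_entry a_def)
    qed
    finally show ?thesis .
  qed
  then have LA: "L ** A = (\<chi> i. if i = j then a *s e + r else row i (pivot_elim A j))"
    by (simp add: vec_eq_iff)
  have "(\<chi> i. if i = j then e else row i (pivot_elim A j)) = pivot_elim A j"
    using pivot_elim_pivot_row[OF assms] by (auto simp: vec_eq_iff e_def row_def axis_def)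
  moreover have "det (\<chi> i. if i = j then r else row i (pivot_elim A j)) = 0"
  proof (rule det_zero_column(1)[of j])
    show "column j (\<chi> i. if i = j then r else row i (pivot_elim A j)) = 0"
      using a0 by (simp add: column_def vec_eq_iff r_def e_def row_def pivot_elim_entry a_def)
  qed
  moreover have "det A = det (L ** A)" by (simp add: det_mul detL)
  ultimately show ?thesis unfolding LA det_row_add det_row_mul by (simp add: a_def)
qed

lemma card_non_unit_rows_pivot_elim:
  assumes "symmetric_matrix A" "pos_def (A::real^'n^'n)" "row j A \<noteq> axis j 1"
  shows "card {i. row i (pivot_elim A j) \<noteq> axis i 1} < card {i. row i A \<noteq> axis i 1}"
proof -
  have "{i. row i (pivot_elim A j) \<noteq> axis i 1} \<subseteq> {i. row i A \<noteq> axis i 1} - {j}"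
  proof
    fix i assume i: "i \<in> {i. row i (pivot_elim A j) \<noteq> axis i 1}"
    then have "i \<noteq> j"
      using pivot_elim_pivot_row[OF assms(1,2)] by (auto simp: row_def axis_def vec_eq_iff)
    moreover have "row i A \<noteq> axis i 1"
    proof
      assume "row i A = axis i 1"
      then have "A$i$k = (if k = i then 1 else 0)" for k by (auto simp: row_def axis_def vec_eq_iff)
      then have "row i (pivot_elim A j) = axis i 1"
        using \<open>i \<noteq> j\<close> by (auto simp: row_def axis_def vec_eq_iff pivot_elim_entry)
      then show False using i by simp
    qed
    ultimately show "i \<in> {i. row i A \<noteq> axis i 1} - {j}" by simp
  qed
  then have "card {i. row i (pivot_elim A j) \<noteq> axis i 1} \<le> card ({i. row i A \<noteq> axis i 1} - {j})"
    by (intro card_mono) simp_all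
  also have "\<dots> < card {i. row i A \<noteq> axis i 1}" using assms(3) by (intro card_Diff1_less) auto
  finally show ?thesis .
qed

lemma hadamard_inequality:
  assumes "symmetric_matrix A" "pos_def A"
  shows "det (A::real^'n^'n) \<le> (\<Prod>i\<in>UNIV. A$i$i)"
  using assms
proof (induction "card {i. row i A \<noteq> axis i 1}" arbitrary: A rule: less_induct)
  case less
  show ?case
  proof (cases "\<forall>i. row i A = axis i 1")
    case True
    then have "A = mat 1" by (auto simp: vec_eq_iff row_def axis_def mat_def)
    moreover have "(\<Prod>i\<in>UNIV. (mat 1 :: real^'n^'n)$i$i) = 1" by (simp add: mat_def)
    ultimately show ?thesis by simp
  next
    case False
    then obtain j where j: "row j A \<noteq> axis j 1" by auto
    define A' where "A' = pivot_elim A j"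
    have IH: "det A' \<le> (\<Prod>i\<in>UNIV. A'$i$i)"
      using less.hyps card_non_unit_rows_pivot_elim[OF less.prems j]
        symmetric_pivot_elim[OF less.prems(1)] pos_def_pivot_elim[OF less.prems]
      by (simp add: A'_def)
    have "(\<Prod>i\<in>UNIV. A'$i$i) = A'$j$j * (\<Prod>i\<in>UNIV-{j}. A'$i$i)"
      by (simp add: prod.remove)
    also have "A'$j$j = 1" using pivot_elim_pivot_row[OF less.prems] by (simp add: A'_def)
    also have "(\<Prod>i\<in>UNIV-{j}. A'$i$i) \<le> (\<Prod>i\<in>UNIV-{j}. A$i$i)"
      using pos_def_diag[OF pos_def_pivot_elim[OF less.prems]] pivot_elim_diag_le[OF less.prems(2)]
      by (intro prod_mono) (auto simp: A'_def less_imp_le)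
    finally have "A$j$j * det A' \<le> A$j$j * (\<Prod>i\<in>UNIV-{j}. A$i$i)"
      using IH pos_def_diag[OF less.prems(2)] by simp
    also have "\<dots> = (\<Prod>i\<in>UNIV. A$i$i)" by (simp add: prod.remove)
    finally show ?thesis using det_pivot_elim[OF less.prems] by (simp add: A'_def)
  qed
qed

section \<open>The self-normalized potential of a regression sequence\<close>

definition noise_sum :: "real^'d \<Rightarrow> ((real^'d) \<times> real) list \<Rightarrow> real^'d" where
  "noise_sum \<theta> D = sum_list (map (\<lambda>(x,y). (y - \<theta> \<bullet> x) *\<^sub>R x) D)"

definition noise_quad :: "real \<Rightarrow> real^'d \<Rightarrow> ((real^'d) \<times> real) list \<Rightarrow> real" where
  "noise_quad lam \<theta> D = noise_sum \<theta> D \<bullet> (matrix_inv (LamOf lam D) *v noise_sum \<theta> D)"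

definition log_det_gain :: "real \<Rightarrow> ((real^'d) \<times> real) list \<Rightarrow> real" where
  "log_det_gain lam D = ln (det (LamOf lam D)) - real CARD('d) * ln lam"

definition potential :: "real \<Rightarrow> real \<Rightarrow> real^'d \<Rightarrow> ((real^'d) \<times> real) list \<Rightarrow> real" where
  "potential Hr lam \<theta> D = noise_quad lam \<theta> D - Hr\<^sup>2 * log_det_gain lam D"

lemma LamOf_snoc: "LamOf lam (D @ [(x,y)]) = LamOf lam D + outer x"
  by (simp add: LamOf_def add.assoc)

lemma noise_sum_snoc: "noise_sum \<theta> (D @ [(x,y)]) = noise_sum \<theta> D + (y - \<theta> \<bullet> x) *\<^sub>R x"
  by (simp add: noise_sum_def)

lemma symmetric_LamOf: "symmetric_matrix (LamOf lam D)"
proof (induction D rule: rev_induct)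
  case Nil
  then show ?case by (simp add: LamOf_def symmetric_matrix_scaled_identity)
next
  case (snoc p D)
  then show ?case by (cases p) (simp add: LamOf_snoc symmetric_matrix_add symmetric_matrix_outer)
qed

lemma LamOf_quadratic_form_ge: "lam * (z \<bullet> z) \<le> z \<bullet> (LamOf lam D *v z)"
proof (induction D rule: rev_induct)
  case Nil
  have "(lam *\<^sub>R mat 1 :: real^'a^'a) *v z = lam *\<^sub>R z"
    by (simp add: scaleR_matrix_vector_assoc[symmetric])
  then show ?case by (simp add: LamOf_def)
next
  case (snoc p D)
  obtain x y where p: "p = (x,y)" by (cases p)
  have "z \<bullet> (LamOf lam (D @ [p]) *v z) = z \<bullet> (LamOf lam D *v z) + (x \<bullet> z)\<^sup>2"
    by (simp add: p LamOf_snoc matrix_vector_mult_add_rdistrib inner_add_right inner_outer_mult_vector)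
  then show ?case using snoc by (smt (verit) zero_le_power2)
qed

lemma pos_def_LamOf: "0 < lam \<Longrightarrow> pos_def (LamOf lam D)"
  unfolding pos_def_def using LamOf_quadratic_form_ge
  by (metis inner_gt_zero_iff mult_pos_pos order_less_le_trans)

lemma invertible_LamOf: "0 < lam \<Longrightarrow> invertible (LamOf lam D)"
  by (rule pos_def_invertible[OF pos_def_LamOf])

lemma LamOf_inv_nonneg: "0 < lam \<Longrightarrow> 0 \<le> x \<bullet> (matrix_inv (LamOf lam D) *v x)"
  by (rule pos_def_inv_nonneg[OF pos_def_LamOf])

lemma LamOf_inv_quadratic_form_le:
  assumes "0 < lam"
  shows "t \<bullet> (matrix_inv (LamOf lam D) *v t) \<le> (norm t)\<^sup>2 / lam"
proof -
  define y where "y = matrix_inv (LamOf lam D) *v t"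
  have "LamOf lam D *v y = t"
    unfolding y_def by (rule matrix_inv_mult_vector(1)[OF invertible_LamOf[OF assms]])
  then have "lam * (y \<bullet> y) \<le> t \<bullet> y"
    using LamOf_quadratic_form_ge[of lam y D] by (simp add: inner_commute)
  also have cs: "t \<bullet> y \<le> norm t * norm y" by (rule norm_cauchy_schwarz)
  finally have "lam * norm y \<le> norm t"
    by (cases "norm y = 0") (auto simp: power2_norm_eq_inner[symmetric] power2_eq_square mult.assoc[symmetric])
  then have "norm y \<le> norm t / lam" using assms by (simp add: field_simps)
  then have "t \<bullet> y \<le> norm t * (norm t / lam)" using cs by (smt (verit) mult_left_mono norm_ge_zero)
  then show ?thesis by (simp add: y_def power2_eq_square)
qed

lemma det_LamOf_Nil: "det (LamOf lam [] :: real^'d^'d) = lam ^ CARD('d)"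
proof -
  have "det (lam *\<^sub>R mat 1 :: real^'d^'d) = (\<Prod>i\<in>(UNIV::'d set). lam)"
    by (subst det_diagonal) (auto simp: mat_def)
  then show ?thesis by (simp add: LamOf_def)
qed

lemma det_LamOf_snoc:
  "0 < lam \<Longrightarrow>
   det (LamOf lam (D @ [(x,y)])) = det (LamOf lam D) * (1 + x \<bullet> (matrix_inv (LamOf lam D) *v x))"
  unfolding LamOf_snoc by (rule det_add_outer[OF invertible_LamOf])

lemma det_LamOf_pos: "0 < lam \<Longrightarrow> 0 < det (LamOf lam D)"
proof (induction D rule: rev_induct)
  case Nil
  then show ?case by (simp add: det_LamOf_Nil)
next
  case (snoc p D)
  obtain x y where p: "p = (x,y)" by (cases p)
  have "0 < 1 + x \<bullet> (matrix_inv (LamOf lam D) *v x)"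
    using LamOf_inv_nonneg[OF snoc.prems, of x D] by simp
  then show ?case using snoc by (simp add: p det_LamOf_snoc)
qed

lemma noise_quad_snoc:
  fixes D :: "((real^'d) \<times> real) list" and x \<theta> :: "real^'d" and y :: real
  assumes "0 < lam"
  defines "V \<equiv> LamOf lam D"
  defines "a \<equiv> x \<bullet> (matrix_inv V *v noise_sum \<theta> D)"
  defines "w \<equiv> x \<bullet> (matrix_inv V *v x)"
  defines "\<eta> \<equiv> y - \<theta> \<bullet> x"
  shows "noise_quad lam \<theta> (D @ [(x,y)]) = noise_quad lam \<theta> D + (2 * \<eta> * a + \<eta>\<^sup>2 * w - a\<^sup>2) / (1 + w)"
proof -
  define S where "S = noise_sum \<theta> D"
  define u where "u = matrix_inv V *v x"
  define S' where "S' = S + \<eta> *\<^sub>R x"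
  have sym: "symmetric_matrix V" by (simp add: V_def symmetric_LamOf)
  have inv: "invertible V" by (simp add: V_def invertible_LamOf[OF assms(1)])
  have inv': "invertible (V + outer x)"
    using invertible_LamOf[OF assms(1), of "D @ [(x,y)]"] by (simp add: V_def LamOf_snoc)
  have "0 \<le> w" unfolding w_def V_def by (rule LamOf_inv_nonneg[OF assms(1)])
  then have w1: "1 + w \<noteq> 0" by simp
  have SM: "matrix_inv (V + outer x) *v S' = matrix_inv V *v S' - ((u \<bullet> S') / (1 + w)) *\<^sub>R u"
    using sherman_morrison[OF sym inv inv'] w1 by (simp add: u_def w_def)
  have syminv: "symmetric_matrix (matrix_inv V)" by (rule symmetric_matrix_inv[OF sym inv])
  have xVS: "x \<bullet> (matrix_inv V *v S) = a" by (simp add: a_def S_def)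
  have uS: "u \<bullet> S = a" "S \<bullet> u = a"
    using symmetric_matrix_inner[OF syminv, of x S] xVS by (simp_all add: u_def inner_commute)
  have ux: "u \<bullet> x = w" by (simp add: u_def w_def inner_commute)
  have "S' \<bullet> (matrix_inv V *v S') = S \<bullet> (matrix_inv V *v S) + 2 * \<eta> * a + \<eta>\<^sup>2 * w"
    using uS(2) unfolding S'_def
    by (simp add: matrix_vector_right_distrib matrix_vector_mult_scaleR inner_add_left inner_add_right
        xVS u_def w_def[symmetric] power2_eq_square algebra_simps)
  moreover have "u \<bullet> S' = a + \<eta> * w" "S' \<bullet> u = a + \<eta> * w"
    by (simp_all add: S'_def inner_add_right inner_add_left uS ux inner_commute)
  ultimately have "S' \<bullet> (matrix_inv (V + outer x) *v S')
      = S \<bullet> (matrix_inv V *v S) + 2 * \<eta> * a + \<eta>\<^sup>2 * w - (a + \<eta> * w)\<^sup>2 / (1 + w)"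
    unfolding SM by (simp add: inner_diff_right power2_eq_square)
  also have "\<dots> = S \<bullet> (matrix_inv V *v S) + (2 * \<eta> * a + \<eta>\<^sup>2 * w - a\<^sup>2) / (1 + w)"
    using w1 by (simp add: field_simps power2_eq_square)
  finally show ?thesis
    by (simp add: noise_quad_def noise_sum_snoc LamOf_snoc V_def[symmetric] S_def[symmetric] S'_def \<eta>_def)
qed

lemma log_det_gain_snoc:
  "0 < lam \<Longrightarrow>
   log_det_gain lam (D @ [(x,y)]) = log_det_gain lam D + ln (1 + x \<bullet> (matrix_inv (LamOf lam D) *v x))"
proof -
  assume "0 < lam"
  then have "0 < det (LamOf lam D)" "0 < 1 + x \<bullet> (matrix_inv (LamOf lam D) *v x)"
    using det_LamOf_pos[of lam D] LamOf_inv_nonneg[of lam x D] by auto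
  with \<open>0 < lam\<close> show ?thesis by (simp add: log_det_gain_def det_LamOf_snoc ln_mult)
qed

lemma potential_Nil: "0 < lam \<Longrightarrow> potential Hr lam \<theta> ([] :: ((real^'d) \<times> real) list) = 0"
  by (simp add: potential_def noise_quad_def noise_sum_def log_det_gain_def det_LamOf_Nil ln_realpow)

lemma frac_le_ln_add_one: "0 \<le> w \<Longrightarrow> w / (1 + w) \<le> ln (1 + (w::real))"
proof -
  assume w: "0 \<le> w"
  have "ln (1 / (1 + w)) \<le> 1 / (1 + w) - 1" by (rule ln_le_minus_one) (use w in simp)
  moreover have "ln (1 / (1 + w)) = - ln (1 + w)" using w by (simp add: ln_div)
  moreover have "1 / (1 + w) - 1 = - (w / (1 + w))" using w by (simp add: field_simps)
  ultimately show ?thesis by simp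
qed

text \<open>The term \<open>\<eta>\<^sup>2 w / (1 + w)\<close> of \<open>noise_quad_snoc\<close> is paid for by the growth
  \<open>Hr\<^sup>2 ln (1 + w)\<close> of the log-determinant; only a term linear in the noise \<open>\<eta>\<close> remains.\<close>

lemma potential_snoc_le:
  fixes D :: "((real^'d) \<times> real) list" and x \<theta> :: "real^'d" and y :: real
  assumes "0 < lam" "(y - \<theta> \<bullet> x)\<^sup>2 \<le> Hr\<^sup>2"
  defines "a \<equiv> x \<bullet> (matrix_inv (LamOf lam D) *v noise_sum \<theta> D)"
  defines "w \<equiv> x \<bullet> (matrix_inv (LamOf lam D) *v x)"
  shows "potential Hr lam \<theta> (D @ [(x,y)]) \<le> potential Hr lam \<theta> D + (2 * (y - \<theta> \<bullet> x) * a - a\<^sup>2) / (1 + w)"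
proof -
  define \<eta> where "\<eta> = y - \<theta> \<bullet> x"
  have w0: "0 \<le> w" unfolding w_def by (rule LamOf_inv_nonneg[OF assms(1)])
  have "\<eta>\<^sup>2 * w / (1 + w) \<le> Hr\<^sup>2 * (w / (1 + w))"
    using assms(2) w0 by (simp add: \<eta>_def divide_right_mono mult_right_mono)
  also have "\<dots> \<le> Hr\<^sup>2 * ln (1 + w)" by (intro mult_left_mono frac_le_ln_add_one w0) simp
  finally have key: "\<eta>\<^sup>2 * w / (1 + w) \<le> Hr\<^sup>2 * ln (1 + w)" .
  have "potential Hr lam \<theta> (D @ [(x,y)])
      = potential Hr lam \<theta> D + (2 * \<eta> * a - a\<^sup>2) / (1 + w) + \<eta>\<^sup>2 * w / (1 + w) - Hr\<^sup>2 * ln (1 + w)"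
    unfolding potential_def noise_quad_snoc[OF assms(1)] log_det_gain_snoc[OF assms(1)]
    by (simp add: a_def w_def \<eta>_def add_divide_distrib diff_divide_distrib algebra_simps)
  then show ?thesis using key by (simp add: \<eta>_def)
qed

lemma LamOf_diag: "LamOf lam D $ i $ i = lam + sum_list (map (\<lambda>(x,y). (x$i)\<^sup>2) D)"
proof (induction D rule: rev_induct)
  case Nil
  then show ?case by (simp add: LamOf_def mat_def)
next
  case (snoc p D)
  then show ?case by (cases p) (simp add: LamOf_snoc outer_def power2_eq_square)
qed

lemma LamOf_diag_le:
  assumes "\<forall>p \<in> set D. norm (fst p) \<le> Hr"
  shows "LamOf lam D $ i $ i \<le> lam + real (length D) * Hr\<^sup>2"
proof -
  have "sum_list (map (\<lambda>(x,y). (x$i)\<^sup>2) D) \<le> real (length D) * Hr\<^sup>2"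
    using assms
  proof (induction D)
    case Nil
    then show ?case by simp
  next
    case (Cons p D)
    obtain x y where p: "p = (x,y)" by (cases p)
    have "\<bar>x$i\<bar> \<le> Hr" using Cons.prems p component_le_norm_cart[of x i] by auto
    then have "(x$i)\<^sup>2 \<le> Hr\<^sup>2" using abs_le_square_iff by (metis abs_ge_zero order_trans power2_abs power_mono)
    then show ?case using Cons by (simp add: p algebra_simps)
  qed
  then show ?thesis by (simp add: LamOf_diag)
qed

lemma log_det_gain_le:
  fixes D :: "((real^'d) \<times> real) list"
  assumes lam: "0 < lam" and "\<forall>p \<in> set D. norm (fst p) \<le> Hr"
  shows "log_det_gain lam D \<le> real CARD('d) * ln (1 + real (length D) * Hr\<^sup>2 / lam)"
proof -
  define b where "b = lam + real (length D) * Hr\<^sup>2"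
  have b0: "0 < b" using lam by (simp add: b_def add_pos_nonneg)
  have "det (LamOf lam D) \<le> (\<Prod>i\<in>UNIV. LamOf lam D $ i $ i)"
    by (rule hadamard_inequality[OF symmetric_LamOf pos_def_LamOf[OF lam]])
  also have "\<dots> \<le> (\<Prod>i\<in>(UNIV::'d set). b)"
    using LamOf_diag_le[OF assms(2)] less_imp_le[OF pos_def_diag[OF pos_def_LamOf[OF lam]]]
    by (intro prod_mono conjI) (auto simp: b_def)
  finally have "ln (det (LamOf lam D)) \<le> ln (b ^ CARD('d))"
    using det_LamOf_pos[OF lam, of D] b0 by simp
  also have "\<dots> = real CARD('d) * ln b" using b0 by (simp add: ln_realpow)
  finally have "ln (det (LamOf lam D)) \<le> real CARD('d) * ln b" .
  moreover have "1 + real (length D) * Hr\<^sup>2 / lam = b / lam"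
    using lam by (simp add: b_def field_simps)
  then have "ln (1 + real (length D) * Hr\<^sup>2 / lam) = ln b - ln lam"
    using lam b0 by (simp add: ln_div)
  ultimately show ?thesis by (simp add: log_det_gain_def right_diff_distrib)
qed

lemma response_sum_eq:
  "sum_list (map (\<lambda>(x,y). y *\<^sub>R x) D) = noise_sum \<theta> D + sum_list (map (\<lambda>(x,y). outer x) D) *v \<theta>"
proof (induction D)
  case Nil
  then show ?case by (simp add: noise_sum_def)
next
  case (Cons p D)
  obtain x y where p: "p = (x,y)" by (cases p)
  have "y *\<^sub>R x = (y - \<theta> \<bullet> x) *\<^sub>R x + outer x *v \<theta>"
    by (simp add: outer_mult_vector inner_commute scaleR_diff_left)
  then show ?case
    using Cons.IH by (simp add: p noise_sum_def matrix_vector_mult_add_rdistrib algebra_simps)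
qed

lemma mnorm_matrix_inv:
  assumes "invertible (A::real^'n^'n)"
  shows "mnorm A (matrix_inv A *v z) = mnorm (matrix_inv A) z"
  by (simp add: mnorm_def matrix_inv_mult_vector[OF assms] inner_commute)

lemma ridge_error_bound:
  fixes D :: "((real^'d) \<times> real) list" and \<theta> :: "real^'d"
  assumes lam: "0 < lam"
  shows "mnorm (LamOf lam D) (matrix_inv (LamOf lam D) *v sum_list (map (\<lambda>(x,y). y *\<^sub>R x) D) - \<theta>)
           \<le> sqrt (noise_quad lam \<theta> D) + sqrt lam * norm \<theta>"
proof -
  define V where "V = LamOf lam D"
  define S where "S = noise_sum \<theta> D"
  have inv: "invertible V" by (simp add: V_def invertible_LamOf[OF lam])
  have syminv: "symmetric_matrix (matrix_inv V)"
    by (rule symmetric_matrix_inv[OF _ inv]) (simp add: V_def symmetric_LamOf)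
  have psd: "0 \<le> z \<bullet> (matrix_inv V *v z)" for z by (simp add: V_def LamOf_inv_nonneg[OF lam])
  have "sum_list (map (\<lambda>(x,y). outer x) D) = V - lam *\<^sub>R mat 1" by (simp add: V_def LamOf_def)
  then have "matrix_inv V *v sum_list (map (\<lambda>(x,y). y *\<^sub>R x) D) - \<theta>
      = matrix_inv V *v (S + (- lam) *\<^sub>R \<theta>)"
    unfolding response_sum_eq[of D \<theta>] S_def[symmetric]
    by (simp add: matrix_vector_right_distrib matrix_vector_mult_diff_rdistrib
        matrix_vector_mult_diff_distrib matrix_inv_mult_vector[OF inv] matrix_vector_mult_scaleR
        scaleR_matrix_vector_assoc[symmetric])
  moreover have "mnorm (matrix_inv V) (- (lam *\<^sub>R \<theta>)) = lam * mnorm (matrix_inv V) \<theta>"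
    using mnorm_scaleR[of "matrix_inv V" "- lam" \<theta>] lam by simp
  ultimately have "mnorm V (matrix_inv V *v sum_list (map (\<lambda>(x,y). y *\<^sub>R x) D) - \<theta>)
      \<le> mnorm (matrix_inv V) S + lam * mnorm (matrix_inv V) \<theta>"
    using mnorm_triangle[OF syminv psd, of S "(- lam) *\<^sub>R \<theta>"]
    by (simp add: mnorm_matrix_inv[OF inv])
  moreover have "mnorm (matrix_inv V) S = sqrt (noise_quad lam \<theta> D)"
    by (simp add: mnorm_def noise_quad_def V_def S_def)
  moreover have "lam * mnorm (matrix_inv V) \<theta> \<le> sqrt lam * norm \<theta>"
  proof -
    have "mnorm (matrix_inv V) \<theta> \<le> sqrt ((norm \<theta>)\<^sup>2 / lam)"
      unfolding mnorm_def V_def by (intro real_sqrt_le_mono LamOf_inv_quadratic_form_le lam)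
    also have "\<dots> = norm \<theta> / sqrt lam" by (simp add: real_sqrt_divide)
    finally have "lam * mnorm (matrix_inv V) \<theta> \<le> lam * (norm \<theta> / sqrt lam)"
      using lam by (intro mult_left_mono) auto
    also have "\<dots> = sqrt lam * norm \<theta>" using lam by (simp add: field_simps)
    finally show ?thesis .
  qed
  ultimately show ?thesis by (simp add: V_def)
qed

section \<open>Supermartingales of histories\<close>

lemma hoeffding_lemma_pmf:
  fixes q :: "'s pmf" and v :: "'s \<Rightarrow> real"
  assumes v0: "\<And>s. 0 \<le> v s" and v1: "\<And>s. v s \<le> Hr"
  shows "(\<integral>\<^sup>+s. ennreal (exp (\<sigma> * (v s - measure_pmf.expectation q v))) \<partial>q)
           \<le> ennreal (exp (\<sigma>\<^sup>2 * Hr\<^sup>2 / 8))"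
proof -
  consider "\<sigma> > 0" | "\<sigma> < 0" | "\<sigma> = 0" by linarith
  then show ?thesis
  proof cases
    case 1
    interpret interval_bounded_random_variable "measure_pmf q" v 0 Hr
      by unfold_locales (auto simp: v0 v1)
    show ?thesis using Hoeffdings_lemma_nn_integral[OF 1] by simp
  next
    case 2
    interpret interval_bounded_random_variable "measure_pmf q" "\<lambda>s. - v s" "- Hr" 0
      by unfold_locales (auto simp: v0 v1)
    show ?thesis using Hoeffdings_lemma_nn_integral[of "- \<sigma>"] 2 by (simp add: algebra_simps)
  next
    case 3
    then show ?thesis by (simp add: measure_pmf.emeasure_space_1)
  qed
qed

lemma expectation_pmf_bounds:
  fixes q :: "'s pmf" and v :: "'s \<Rightarrow> real"
  assumes v0: "\<And>s. 0 \<le> v s" and v1: "\<And>s. v s \<le> Hr"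
  shows "0 \<le> measure_pmf.expectation q v" "measure_pmf.expectation q v \<le> Hr"
proof -
  interpret interval_bounded_random_variable "measure_pmf q" v 0 Hr
    by unfold_locales (auto simp: v0 v1)
  show "0 \<le> measure_pmf.expectation q v" by (rule integral_nonneg_AE) (simp add: v0)
  have "measure_pmf.expectation q v \<le> measure_pmf.expectation q (\<lambda>_. Hr)"
    by (rule integral_mono) (auto simp: v1)
  then show "measure_pmf.expectation q v \<le> Hr" by simp
qed

text \<open>The increment bound of \<open>potential_snoc_le\<close> is \<open>\<sigma> (V s - \<theta> \<bullet> x)\<close> minus a quadratic
  term in \<open>\<sigma>\<close> that exactly absorbs Hoeffding's bound \<open>\<sigma>\<^sup>2 Hr\<^sup>2 / 8\<close>.\<close>

lemma exp_potential_supermartingale_step: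
  fixes q :: "'s pmf" and V :: "'s \<Rightarrow> real" and D :: "((real^'d) \<times> real) list" and x \<theta> :: "real^'d"
  assumes lam: "0 < lam" and Hr: "0 < Hr" and V0: "\<And>s. 0 \<le> V s" and V1: "\<And>s. V s \<le> Hr"
    and mean: "measure_pmf.expectation q V = \<theta> \<bullet> x"
  shows "(\<integral>\<^sup>+s. ennreal (exp (2 / Hr\<^sup>2 * potential Hr lam \<theta> (D @ [(x, V s)]))) \<partial>q)
           \<le> ennreal (exp (2 / Hr\<^sup>2 * potential Hr lam \<theta> D))"
proof -
  define c where "c = 2 / Hr\<^sup>2"
  define a where "a = x \<bullet> (matrix_inv (LamOf lam D) *v noise_sum \<theta> D)"
  define w where "w = x \<bullet> (matrix_inv (LamOf lam D) *v x)"
  define \<sigma> where "\<sigma> = 2 * c * a / (1 + w)"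
  define K where "K = exp (c * potential Hr lam \<theta> D - c * a\<^sup>2 / (1 + w))"
  have w0: "0 \<le> w" unfolding w_def by (rule LamOf_inv_nonneg[OF lam])
  have c0: "0 < c" using Hr by (simp add: c_def)
  have "0 \<le> \<theta> \<bullet> x" "\<theta> \<bullet> x \<le> Hr" using expectation_pmf_bounds[of V Hr q, OF V0 V1] mean by auto
  then have pointwise: "exp (c * potential Hr lam \<theta> (D @ [(x, V s)]))
      \<le> K * exp (\<sigma> * (V s - measure_pmf.expectation q V))" for s
  proof -
    have "(V s - \<theta> \<bullet> x)\<^sup>2 \<le> Hr\<^sup>2"
      using V0[of s] V1[of s] \<open>0 \<le> \<theta> \<bullet> x\<close> \<open>\<theta> \<bullet> x \<le> Hr\<close> Hr
      by (intro power2_le_iff_abs_le[THEN iffD2]) auto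
    from potential_snoc_le[OF lam this]
    have "c * potential Hr lam \<theta> (D @ [(x, V s)])
        \<le> c * (potential Hr lam \<theta> D + (2 * (V s - \<theta> \<bullet> x) * a - a\<^sup>2) / (1 + w))"
      using c0 by (simp add: a_def w_def)
    also have "\<dots> = (c * potential Hr lam \<theta> D - c * a\<^sup>2 / (1 + w)) + \<sigma> * (V s - \<theta> \<bullet> x)"
      unfolding \<sigma>_def
      by (simp add: distrib_left diff_divide_distrib right_diff_distrib mult.commute mult.left_commute)
    finally show ?thesis by (simp add: K_def mean exp_add[symmetric])
  qed
  have "(\<integral>\<^sup>+s. ennreal (exp (c * potential Hr lam \<theta> (D @ [(x, V s)]))) \<partial>q)
      \<le> (\<integral>\<^sup>+s. ennreal K * ennreal (exp (\<sigma> * (V s - measure_pmf.expectation q V))) \<partial>q)"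
    using pointwise by (intro nn_integral_mono) (simp add: ennreal_mult[symmetric] K_def ennreal_leI)
  also have "\<dots> = ennreal K * (\<integral>\<^sup>+s. ennreal (exp (\<sigma> * (V s - measure_pmf.expectation q V))) \<partial>q)"
    by (rule nn_integral_cmult) simp
  also have "\<dots> \<le> ennreal K * ennreal (exp (\<sigma>\<^sup>2 * Hr\<^sup>2 / 8))"
    by (intro mult_left_mono hoeffding_lemma_pmf V0 V1) simp
  also have "\<dots> = ennreal (K * exp (\<sigma>\<^sup>2 * Hr\<^sup>2 / 8))"
    by (simp add: ennreal_mult K_def)
  also have "\<dots> \<le> ennreal (exp (c * potential Hr lam \<theta> D))"
  proof (rule ennreal_leI)
    have "\<sigma>\<^sup>2 * Hr\<^sup>2 / 8 = (c * a\<^sup>2 / (1 + w)) / (1 + w)"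
      using Hr w0 by (simp add: \<sigma>_def c_def power_divide power_mult_distrib divide_simps power2_eq_square)
    also have "\<dots> \<le> c * a\<^sup>2 / (1 + w)"
      using divide_left_mono[of 1 "1 + w" "c * a\<^sup>2 / (1 + w)"] w0 c0 by simp
    finally show "K * exp (\<sigma>\<^sup>2 * Hr\<^sup>2 / 8) \<le> exp (c * potential Hr lam \<theta> D)"
      unfolding K_def exp_add[symmetric] by simp
  qed
  finally show ?thesis by (simp add: c_def)
qed

lemma nn_integral_pmf_const_AE:
  assumes "\<And>x. x \<in> set_pmf M \<Longrightarrow> f x = c"
  shows "(\<integral>\<^sup>+x. f x \<partial>measure_pmf M) = c"
proof -
  have "(\<integral>\<^sup>+x. f x \<partial>measure_pmf M) = (\<integral>\<^sup>+x. c \<partial>measure_pmf M)"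
    by (rule nn_integral_cong_AE) (auto simp: AE_measure_pmf_iff assms)
  then show ?thesis by (simp add: measure_pmf.emeasure_space_1)
qed

primrec stopped_process :: "(nat \<Rightarrow> 'x list \<Rightarrow> real) \<Rightarrow> real \<Rightarrow> nat \<Rightarrow> 'x list \<Rightarrow> real" where
  "stopped_process Z c 0 hist = Z 0 hist"
| "stopped_process Z c (Suc N) hist =
     (if c \<le> stopped_process Z c N hist then stopped_process Z c N hist else Z (Suc N) hist)"

lemma stopped_process_append:
  assumes "\<And>m hist t. m \<le> length hist \<Longrightarrow> Z m (hist @ t) = Z m hist"
  shows "N \<le> length hist \<Longrightarrow> stopped_process Z c N (hist @ t) = stopped_process Z c N hist"
  by (induction N) (auto simp: assms)

lemma stopped_process_ge: "m \<le> N \<Longrightarrow> c \<le> Z m hist \<Longrightarrow> c \<le> stopped_process Z c N hist"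
proof (induction N)
  case 0
  then show ?case by simp
next
  case (Suc N)
  then show ?case by (cases "m \<le> N") (auto simp: le_Suc_eq)
qed

lemma stopped_process_below:
  "\<not> c \<le> stopped_process Z c N hist \<Longrightarrow> stopped_process Z c N hist = Z N hist"
  by (cases N) (auto split: if_splits)

locale history_supermartingale =
  fixes R :: "nat \<Rightarrow> 'x list pmf" and E :: "nat \<Rightarrow> 'x list \<Rightarrow> 'x pmf"
    and Z :: "nat \<Rightarrow> 'x list \<Rightarrow> real"
  assumes R_0: "R 0 = return_pmf []"
    and R_Suc: "\<And>N. R (Suc N) = bind_pmf (R N) (\<lambda>hist. map_pmf (\<lambda>\<tau>. hist @ [\<tau>]) (E N hist))"
    and adapted: "\<And>m hist t. m \<le> length hist \<Longrightarrow> Z m (hist @ t) = Z m hist"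
    and Z_0: "Z 0 [] \<le> 1"
    and supermartingale: "\<And>N hist. length hist = N \<Longrightarrow>
           (\<integral>\<^sup>+\<tau>. ennreal (Z (Suc N) (hist @ [\<tau>])) \<partial>E N hist) \<le> ennreal (Z N hist)"
begin

lemma length_of_set_pmf: "hist \<in> set_pmf (R N) \<Longrightarrow> length hist = N"
  by (induction N arbitrary: hist) (auto simp: R_0 R_Suc)

lemma nn_integral_stopped_process_le: "(\<integral>\<^sup>+hist. ennreal (stopped_process Z c N hist) \<partial>R N) \<le> 1"
proof (induction N)
  case 0
  then show ?case using Z_0 by (simp add: R_0)
next
  case (Suc N)
  have step: "(\<integral>\<^sup>+\<tau>. ennreal (stopped_process Z c (Suc N) (hist @ [\<tau>])) \<partial>E N hist)
      \<le> ennreal (stopped_process Z c N hist)" if "hist \<in> set_pmf (R N)" for hist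
  proof -
    have len: "length hist = N" using length_of_set_pmf[OF that] .
    have app: "stopped_process Z c N (hist @ [\<tau>]) = stopped_process Z c N hist" for \<tau>
      using stopped_process_append[of Z N hist c "[\<tau>]"] adapted len by auto
    show ?thesis
    proof (cases "c \<le> stopped_process Z c N hist")
      case True
      then have "(\<integral>\<^sup>+\<tau>. ennreal (stopped_process Z c (Suc N) (hist @ [\<tau>])) \<partial>E N hist)
          = ennreal (stopped_process Z c N hist)"
        by (intro nn_integral_pmf_const_AE) (simp add: app)
      then show ?thesis by simp
    next
      case False
      then have "(\<integral>\<^sup>+\<tau>. ennreal (stopped_process Z c (Suc N) (hist @ [\<tau>])) \<partial>E N hist)
          = (\<integral>\<^sup>+\<tau>. ennreal (Z (Suc N) (hist @ [\<tau>])) \<partial>E N hist)"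
        by (intro nn_integral_cong) (simp add: app)
      also have "\<dots> \<le> ennreal (Z N hist)" using supermartingale[OF len] .
      finally show ?thesis using stopped_process_below[OF False] by simp
    qed
  qed
  have "(\<integral>\<^sup>+hist. ennreal (stopped_process Z c (Suc N) hist) \<partial>R (Suc N))
      = (\<integral>\<^sup>+hist. (\<integral>\<^sup>+\<tau>. ennreal (stopped_process Z c (Suc N) (hist @ [\<tau>])) \<partial>E N hist) \<partial>R N)"
    by (simp add: R_Suc)
  also have "\<dots> \<le> (\<integral>\<^sup>+hist. ennreal (stopped_process Z c N hist) \<partial>R N)"
    by (rule nn_integral_mono_AE) (auto simp: AE_measure_pmf_iff step simp del: stopped_process.simps)
  also have "\<dots> \<le> 1" by (rule Suc.IH)
  finally show ?case .
qed

lemma ville_inequality: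
  assumes c: "0 < c"
  shows "measure_pmf.prob (R N) {hist. \<exists>m \<le> N. c \<le> Z m hist} \<le> 1 / c"
proof -
  define A where "A = {hist. \<exists>m \<le> N. c \<le> Z m hist}"
  have "ennreal c * emeasure (measure_pmf (R N)) A = (\<integral>\<^sup>+hist. ennreal c * indicator A hist \<partial>R N)"
    by (simp add: nn_integral_cmult_indicator)
  also have "\<dots> \<le> (\<integral>\<^sup>+hist. ennreal (stopped_process Z c N hist) \<partial>R N)"
    by (intro nn_integral_mono)
      (auto simp: A_def indicator_def intro!: ennreal_leI dest: stopped_process_ge)
  also have "\<dots> \<le> 1" by (rule nn_integral_stopped_process_le)
  finally have "ennreal (c * measure_pmf.prob (R N) A) \<le> ennreal 1"
    using c by (simp add: measure_pmf.emeasure_eq_measure ennreal_mult)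
  then have "c * measure_pmf.prob (R N) A \<le> 1"
    by (subst (asm) ennreal_le_iff) auto
  then show ?thesis using c by (simp add: A_def field_simps)
qed

end

section \<open>The regression data of the algorithm\<close>

lemma steps_start_state: "\<tau> \<in> set_pmf (steps P \<pi> h0 s n) \<Longrightarrow> fst \<tau> h0 = s"
  by (induction n arbitrary: h0 s \<tau>) (auto simp: split_beta)

lemma nn_integral_steps_transition:
  fixes F :: "'s \<Rightarrow> 'a \<Rightarrow> 's \<Rightarrow> ennreal"
  assumes "h0 \<le> h" "h < h0 + n"
  shows "(\<integral>\<^sup>+\<tau>. F (fst \<tau> h) (snd \<tau> h) (fst \<tau> (Suc h)) \<partial>steps P \<pi> h0 s n)
       = (\<integral>\<^sup>+\<tau>. (\<integral>\<^sup>+s'. F (fst \<tau> h) (\<pi> h (fst \<tau> h)) s' \<partial>P h (fst \<tau> h) (\<pi> h (fst \<tau> h)))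
            \<partial>steps P \<pi> h0 s n)"
  using assms
proof (induction n arbitrary: h0 s)
  case 0
  then show ?case by simp
next
  case (Suc n)
  show ?case
  proof (cases "h = h0")
    case True
    define C where "C = (\<integral>\<^sup>+s'. F s (\<pi> h0 s) s' \<partial>P h0 s (\<pi> h0 s))"
    have "(\<integral>\<^sup>+\<tau>. F (fst \<tau> h) (snd \<tau> h) (fst \<tau> (Suc h)) \<partial>steps P \<pi> h0 s (Suc n))
        = (\<integral>\<^sup>+s'. (\<integral>\<^sup>+\<tau>. F s (\<pi> h0 s) (fst \<tau> (Suc h0)) \<partial>steps P \<pi> (Suc h0) s' n) \<partial>P h0 s (\<pi> h0 s))"
      using True by (simp add: split_beta)
    also have "\<dots> = C"
      unfolding C_def by (intro nn_integral_cong nn_integral_pmf_const_AE) (auto dest: steps_start_state)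
    also have "\<dots> = (\<integral>\<^sup>+s'. (\<integral>\<^sup>+\<tau>. C \<partial>steps P \<pi> (Suc h0) s' n) \<partial>P h0 s (\<pi> h0 s))"
      by (simp add: measure_pmf.emeasure_space_1)
    also have "\<dots> = (\<integral>\<^sup>+\<tau>. (\<integral>\<^sup>+s'. F (fst \<tau> h) (\<pi> h (fst \<tau> h)) s' \<partial>P h (fst \<tau> h) (\<pi> h (fst \<tau> h)))
                      \<partial>steps P \<pi> h0 s (Suc n))"
      using True by (simp add: split_beta C_def)
    finally show ?thesis .
  next
    case False
    then have h1: "Suc h0 \<le> h" "h < Suc h0 + n" using Suc.prems by auto
    have "(\<integral>\<^sup>+\<tau>. F (fst \<tau> h) (snd \<tau> h) (fst \<tau> (Suc h)) \<partial>steps P \<pi> h0 s (Suc n))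
        = (\<integral>\<^sup>+s'. (\<integral>\<^sup>+\<tau>. F (fst \<tau> h) (snd \<tau> h) (fst \<tau> (Suc h)) \<partial>steps P \<pi> (Suc h0) s' n)
              \<partial>P h0 s (\<pi> h0 s))"
      using False h1 by (simp add: split_beta)
    also have "\<dots> = (\<integral>\<^sup>+s'. (\<integral>\<^sup>+\<tau>. (\<integral>\<^sup>+s''. F (fst \<tau> h) (\<pi> h (fst \<tau> h)) s''
                                \<partial>P h (fst \<tau> h) (\<pi> h (fst \<tau> h))) \<partial>steps P \<pi> (Suc h0) s' n) \<partial>P h0 s (\<pi> h0 s))"
      using Suc.IH[OF h1] by simp
    also have "\<dots> = (\<integral>\<^sup>+\<tau>. (\<integral>\<^sup>+s'. F (fst \<tau> h) (\<pi> h (fst \<tau> h)) s' \<partial>P h (fst \<tau> h) (\<pi> h (fst \<tau> h)))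
                      \<partial>steps P \<pi> h0 s (Suc n))"
      using False h1 by (simp add: split_beta)
    finally show ?thesis .
  qed
qed

lemma length_data: "length (data \<phi> lam selV hist h n) = n"
  by (induction n) (simp_all add: Let_def)

lemma data_append: "m \<le> length hist \<Longrightarrow> data \<phi> lam selV (hist @ t) h m = data \<phi> lam selV hist h m"
  by (induction m) (auto simp: nth_append Let_def)

lemma data_snoc:
  fixes \<phi> :: "'s::finite \<Rightarrow> 'a \<Rightarrow> 's \<Rightarrow> real^'d" and lam :: real and h N :: nat
    and hist :: "('s,'a) traj list" and selV :: "nat \<Rightarrow> nat \<Rightarrow> real^'d^'d \<Rightarrow> 's \<Rightarrow> 'a \<Rightarrow> ('s \<Rightarrow> real)"
  assumes "length hist = N"
  defines "V \<equiv> selV (Suc N) h (LamOf lam (data \<phi> lam selV hist h N))"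
  shows "data \<phi> lam selV (hist @ [\<tau>]) h (Suc N) =
     data \<phi> lam selV hist h N @
       [(feat \<phi> (fst \<tau> h) (snd \<tau> h) (V (fst \<tau> h) (snd \<tau> h)), V (fst \<tau> h) (snd \<tau> h) (fst \<tau> (Suc h)))]"
  using assms data_append[of N hist \<phi> lam selV "[\<tau>]" h] by (simp add: Let_def nth_append)

lemma feat_scaleR: "feat \<phi> s a (\<lambda>s'. c * W s') = c *\<^sub>R feat \<phi> s a W"
  by (simp add: feat_def scaleR_sum_right)

lemma norm_feat_Vset:
  assumes phi_bound: "\<forall>s a V. (\<forall>s'. 0 \<le> V s' \<and> V s' \<le> 1) \<longrightarrow> norm (feat \<phi> s a V) \<le> 1"
    and V: "V \<in> Vset H"
  shows "norm (feat \<phi> s a V) \<le> real H"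
proof (cases "H = 0")
  case True
  then have "V = (\<lambda>_. 0)" using V by (auto simp: Vset_def intro: antisym)
  then show ?thesis by (simp add: feat_def)
next
  case False
  then have "feat \<phi> s a V = real H *\<^sub>R feat \<phi> s a (\<lambda>s'. V s' / real H)"
    using feat_scaleR[of \<phi> s a "real H" "\<lambda>s'. V s' / real H"] by simp
  moreover have "norm (feat \<phi> s a (\<lambda>s'. V s' / real H)) \<le> 1"
    using phi_bound V False by (simp add: Vset_def)
  ultimately show ?thesis using False by simp
qed

lemma norm_data_features_le:
  assumes phi_bound: "\<forall>s a V. (\<forall>s'. 0 \<le> V s' \<and> V s' \<le> 1) \<longrightarrow> norm (feat \<phi> s a V) \<le> 1"
    and selV: "\<And>k h L s a. selV k h L s a \<in> Vset H"
  shows "p \<in> set (data \<phi> lam selV hist h n) \<Longrightarrow> norm (fst p) \<le> real H"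
  by (induction n) (auto simp: Let_def intro: norm_feat_Vset[OF phi_bound selV])

lemma expectation_trans:
  fixes \<theta> :: "nat \<Rightarrow> real^'d" and \<phi> :: "'s::finite \<Rightarrow> 'a \<Rightarrow> 's \<Rightarrow> real^'d"
  assumes nonneg: "\<forall>s'. 0 \<le> \<theta> h \<bullet> \<phi> s a s'" and sum1: "(\<Sum>s'\<in>UNIV. \<theta> h \<bullet> \<phi> s a s') = 1"
  shows "measure_pmf.expectation (trans \<theta> \<phi> h s a) V = \<theta> h \<bullet> feat \<phi> s a V"
proof -
  have "pmf (trans \<theta> \<phi> h s a) s' = \<theta> h \<bullet> \<phi> s a s'" for s'
    unfolding trans_def
    by (rule pmf_embed_pmf) (use nonneg sum1 in \<open>auto simp: nn_integral_count_space_finite\<close>)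
  then have "measure_pmf.expectation (trans \<theta> \<phi> h s a) V = (\<Sum>s'\<in>UNIV. V s' * (\<theta> h \<bullet> \<phi> s a s'))"
    by (subst integral_measure_pmf[of UNIV]) (auto simp: mult.commute)
  then show ?thesis by (simp add: feat_def inner_sum_right)
qed

lemma norm_param_ge_one:
  fixes \<theta> :: "real^'d" and \<phi> :: "'s::finite \<Rightarrow> 'a \<Rightarrow> 's \<Rightarrow> real^'d"
  assumes phi_bound: "\<forall>s a V. (\<forall>s'. 0 \<le> V s' \<and> V s' \<le> 1) \<longrightarrow> norm (feat \<phi> s a V) \<le> 1"
    and sum1: "\<forall>s a. (\<Sum>s'\<in>UNIV. \<theta> \<bullet> \<phi> s a s') = 1"
  shows "1 \<le> norm \<theta>"
proof -
  define f where "f = feat \<phi> undefined undefined (\<lambda>_. 1)"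
  have "\<theta> \<bullet> f = 1" using sum1 by (simp add: f_def feat_def inner_sum_right)
  moreover have "norm f \<le> 1" using phi_bound by (simp add: f_def)
  ultimately show ?thesis
    using norm_cauchy_schwarz[of \<theta> f] by (smt (verit) mult_left_le norm_ge_zero)
qed

definition exp_potential ::
  "('s::finite \<Rightarrow> 'a \<Rightarrow> 's \<Rightarrow> real^'d) \<Rightarrow> real \<Rightarrow> (nat \<Rightarrow> nat \<Rightarrow> real^'d^'d \<Rightarrow> 's \<Rightarrow> 'a \<Rightarrow> ('s \<Rightarrow> real))
    \<Rightarrow> (nat \<Rightarrow> real^'d) \<Rightarrow> nat \<Rightarrow> nat \<Rightarrow> nat \<Rightarrow> ('s,'a) traj list \<Rightarrow> real" where
  "exp_potential \<phi> lam selV \<theta> H h m hist =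
     exp (2 / (real H)\<^sup>2 * potential (real H) lam (\<theta> h) (data \<phi> lam selV hist h m))"

lemma exp_potential_supermartingale:
  fixes \<phi> :: "'s::finite \<Rightarrow> 'a \<Rightarrow> 's \<Rightarrow> real^'d" and \<theta> :: "nat \<Rightarrow> real^'d"
  assumes h: "h \<in> {1..H}" and lam: "0 < lam"
    and nonneg: "\<forall>s a s'. 0 \<le> \<theta> h \<bullet> \<phi> s a s'" and sum1: "\<forall>s a. (\<Sum>s'\<in>UNIV. \<theta> h \<bullet> \<phi> s a s') = 1"
    and selV: "\<And>k h L s a. selV k h L s a \<in> Vset H"
    and len: "length hist = N"
  shows "(\<integral>\<^sup>+\<tau>. ennreal (exp_potential \<phi> lam selV \<theta> H h (Suc N) (hist @ [\<tau>])) \<partial>steps (trans \<theta> \<phi>) \<pi> 1 s1 H)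
           \<le> ennreal (exp_potential \<phi> lam selV \<theta> H h N hist)"
proof -
  define D where "D = data \<phi> lam selV hist h N"
  define W where "W = selV (Suc N) h (LamOf lam D)"
  define F where "F = (\<lambda>s a s'. ennreal (exp (2 / (real H)\<^sup>2 *
                         potential (real H) lam (\<theta> h) (D @ [(feat \<phi> s a (W s a), W s a s')]))))"
  have step: "(\<integral>\<^sup>+s'. F s a s' \<partial>trans \<theta> \<phi> h s a) \<le> ennreal (exp_potential \<phi> lam selV \<theta> H h N hist)"
    for s a
  proof -
    have range: "0 \<le> W s a s'" "W s a s' \<le> real H" for s'
      using selV[of "Suc N" h "LamOf lam D" s a] by (auto simp: W_def Vset_def)
    have "measure_pmf.expectation (trans \<theta> \<phi> h s a) (W s a) = \<theta> h \<bullet> feat \<phi> s a (W s a)"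
      by (rule expectation_trans) (use nonneg sum1 in auto)
    from exp_potential_supermartingale_step[OF lam _ range this] h
    show ?thesis by (simp add: F_def exp_potential_def D_def)
  qed
  have "(\<integral>\<^sup>+\<tau>. ennreal (exp_potential \<phi> lam selV \<theta> H h (Suc N) (hist @ [\<tau>])) \<partial>steps (trans \<theta> \<phi>) \<pi> 1 s1 H)
      = (\<integral>\<^sup>+\<tau>. F (fst \<tau> h) (snd \<tau> h) (fst \<tau> (Suc h)) \<partial>steps (trans \<theta> \<phi>) \<pi> 1 s1 H)"
    unfolding exp_potential_def data_snoc[OF len] by (simp add: F_def D_def W_def)
  also have "\<dots> = (\<integral>\<^sup>+\<tau>. (\<integral>\<^sup>+s'. F (fst \<tau> h) (\<pi> h (fst \<tau> h)) s' \<partial>trans \<theta> \<phi> h (fst \<tau> h) (\<pi> h (fst \<tau> h)))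
                     \<partial>steps (trans \<theta> \<phi>) \<pi> 1 s1 H)"
    by (rule nn_integral_steps_transition) (use h in auto)
  also have "\<dots> \<le> (\<integral>\<^sup>+\<tau>. ennreal (exp_potential \<phi> lam selV \<theta> H h N hist) \<partial>steps (trans \<theta> \<phi>) \<pi> 1 s1 H)"
    by (intro nn_integral_mono step)
  finally show ?thesis by (simp add: measure_pmf.emeasure_space_1)
qed

lemma prob_exp_potential_exceeds:
  fixes \<phi> :: "'s::finite \<Rightarrow> 'a \<Rightarrow> 's \<Rightarrow> real^'d" and \<theta> :: "nat \<Rightarrow> real^'d"
  assumes h: "h \<in> {1..H}" and lam: "0 < lam" and c: "0 < c"
    and nonneg: "\<forall>s a s'. 0 \<le> \<theta> h \<bullet> \<phi> s a s'" and sum1: "\<forall>s a. (\<Sum>s'\<in>UNIV. \<theta> h \<bullet> \<phi> s a s') = 1"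
    and selV: "\<And>k h L s a. selV k h L s a \<in> Vset H"
  shows "measure_pmf.prob (run \<theta> \<phi> H lam \<beta> selV selA s1 K)
           {hist. \<exists>m \<le> K. c \<le> exp_potential \<phi> lam selV \<theta> H h m hist} \<le> 1 / c"
proof -
  interpret history_supermartingale "run \<theta> \<phi> H lam \<beta> selV selA s1"
    "\<lambda>N hist. steps (trans \<theta> \<phi>) (pol \<phi> H lam \<beta> selV selA hist (Suc N)) 1 s1 H"
    "exp_potential \<phi> lam selV \<theta> H h"
  proof
    show "exp_potential \<phi> lam selV \<theta> H h m (hist @ t) = exp_potential \<phi> lam selV \<theta> H h m hist"
      if "m \<le> length hist" for m hist t
      using that by (simp add: exp_potential_def data_append)
    show "exp_potential \<phi> lam selV \<theta> H h 0 [] \<le> 1"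
      using lam by (simp add: exp_potential_def potential_Nil)
    show "(\<integral>\<^sup>+\<tau>. ennreal (exp_potential \<phi> lam selV \<theta> H h (Suc N) (hist @ [\<tau>]))
            \<partial>steps (trans \<theta> \<phi>) (pol \<phi> H lam \<beta> selV selA hist (Suc N)) 1 s1 H)
          \<le> ennreal (exp_potential \<phi> lam selV \<theta> H h N hist)" if "length hist = N" for N hist
      by (rule exp_potential_supermartingale) (use h lam nonneg sum1 selV that in auto)
  qed simp_all
  show ?thesis by (rule ville_inequality[OF c])
qed

lemma confidence_radius_arith:
  fixes Hr lam \<delta> d K q :: real
  assumes Hr: "1 \<le> Hr" and K: "1 \<le> K" and lam: "0 < lam" "lam \<le> 1" and \<delta>: "0 < \<delta>" "\<delta> < 1"
    and d: "1 \<le> d"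
    and q: "q \<le> Hr\<^sup>2 / 2 * ln (2 * Hr / \<delta>) + Hr\<^sup>2 * (d * ln (1 + K * Hr\<^sup>2 / lam))"
  shows "q \<le> Hr\<^sup>2 * (d * ln (4 * Hr ^ 3 * K / (lam * \<delta>)))"
proof -
  define X where "X = K * Hr\<^sup>2 / lam"
  have "1 \<le> K * Hr\<^sup>2" using Hr K by (metis mult_mono' one_le_power mult_1_left zero_le_one order_trans)
  also have "\<dots> \<le> X" using lam K Hr by (simp add: X_def le_divide_eq mult_le_cancel_left1)
  finally have X1: "1 \<le> X" .
  have "1 \<le> 2 * Hr / \<delta>" using Hr \<delta> by (simp add: le_divide_eq)
  then have lnp: "0 \<le> ln (2 * Hr / \<delta>)" by simp
  have product: "4 * Hr ^ 3 * K / (lam * \<delta>) = (2 * X) * (2 * Hr / \<delta>)"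
    using lam \<delta> by (simp add: X_def field_simps power3_eq_cube power2_eq_square)
  have split: "ln (4 * Hr ^ 3 * K / (lam * \<delta>)) = ln (2 * X) + ln (2 * Hr / \<delta>)"
    unfolding product using X1 Hr \<delta> by (intro ln_mult_pos) auto
  have "1 / 2 * ln (2 * Hr / \<delta>) \<le> d * ln (2 * Hr / \<delta>)"
    using d lnp by (intro mult_right_mono) auto
  then have "Hr\<^sup>2 / 2 * ln (2 * Hr / \<delta>) \<le> Hr\<^sup>2 * (d * ln (2 * Hr / \<delta>))"
    using mult_left_mono[of _ _ "Hr\<^sup>2"] by fastforce
  moreover have "Hr\<^sup>2 * (d * ln (1 + X)) \<le> Hr\<^sup>2 * (d * ln (2 * X))"
    using X1 d by (intro mult_left_mono) auto
  ultimately have "q \<le> Hr\<^sup>2 * (d * ln (2 * Hr / \<delta>)) + Hr\<^sup>2 * (d * ln (2 * X))"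
    using q by (simp add: X_def)
  also have "\<dots> = Hr\<^sup>2 * (d * ln (4 * Hr ^ 3 * K / (lam * \<delta>)))"
    unfolding split by (simp add: algebra_simps)
  finally show ?thesis .
qed

lemma ridge_error_le_of_potential:
  fixes D :: "((real^'d) \<times> real) list" and \<theta> :: "real^'d"
  assumes Hr: "1 \<le> Hr" and lam: "0 < lam" "lam \<le> 1" and \<delta>: "0 < \<delta>" "\<delta> < 1"
    and K: "1 \<le> K" "length D \<le> K" and features: "\<forall>p \<in> set D. norm (fst p) \<le> Hr"
    and pot: "potential Hr lam \<theta> D \<le> Hr\<^sup>2 / 2 * ln (2 * Hr / \<delta>)"
  shows "mnorm (LamOf lam D) (matrix_inv (LamOf lam D) *v sum_list (map (\<lambda>(x,y). y *\<^sub>R x) D) - \<theta>)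
           \<le> Hr * sqrt (real CARD('d) * ln (4 * Hr ^ 3 * real K / (lam * \<delta>))) + sqrt lam * norm \<theta>"
proof -
  have "log_det_gain lam D \<le> real CARD('d) * ln (1 + real (length D) * Hr\<^sup>2 / lam)"
    by (rule log_det_gain_le[OF lam(1) features])
  also have "\<dots> \<le> real CARD('d) * ln (1 + real K * Hr\<^sup>2 / lam)"
  proof (intro mult_left_mono)
    have "real (length D) * Hr\<^sup>2 / lam \<le> real K * Hr\<^sup>2 / lam"
      using K lam by (intro divide_right_mono mult_right_mono) auto
    then show "ln (1 + real (length D) * Hr\<^sup>2 / lam) \<le> ln (1 + real K * Hr\<^sup>2 / lam)"
      using lam by (simp add: add_pos_nonneg)
  qed simp
  finally have "Hr\<^sup>2 * log_det_gain lam D \<le> Hr\<^sup>2 * (real CARD('d) * ln (1 + real K * Hr\<^sup>2 / lam))"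
    by (rule mult_left_mono) simp
  then have "noise_quad lam \<theta> D
      \<le> Hr\<^sup>2 / 2 * ln (2 * Hr / \<delta>) + Hr\<^sup>2 * (real CARD('d) * ln (1 + real K * Hr\<^sup>2 / lam))"
    using pot unfolding potential_def by linarith
  then have "noise_quad lam \<theta> D \<le> Hr\<^sup>2 * (real CARD('d) * ln (4 * Hr ^ 3 * real K / (lam * \<delta>)))"
    using confidence_radius_arith[OF Hr _ lam \<delta>] K by simp
  then have "sqrt (noise_quad lam \<theta> D)
      \<le> sqrt (Hr\<^sup>2 * (real CARD('d) * ln (4 * Hr ^ 3 * real K / (lam * \<delta>))))"
    by (rule real_sqrt_le_mono)
  also have "\<dots> = Hr * sqrt (real CARD('d) * ln (4 * Hr ^ 3 * real K / (lam * \<delta>)))"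
    using Hr by (simp add: real_sqrt_mult)
  finally show ?thesis using ridge_error_bound[OF lam(1), of D \<theta>] by linarith
qed

lemma estimation_error_le_of_exp_potential:
  fixes \<phi> :: "'s::finite \<Rightarrow> 'a \<Rightarrow> 's \<Rightarrow> real^'d" and \<theta> :: "nat \<Rightarrow> real^'d"
  assumes phi_bound: "\<forall>s a V. (\<forall>s'. 0 \<le> V s' \<and> V s' \<le> 1) \<longrightarrow> norm (feat \<phi> s a V) \<le> 1"
    and selV: "\<And>k h L s a. selV k h L s a \<in> Vset H"
    and H: "1 \<le> H" and lam: "0 < lam" "lam \<le> 1" and \<delta>: "0 < \<delta>" "\<delta> < 1" and k: "k \<in> {1..K}"
    and B: "norm (\<theta> h) \<le> B"
    and small: "exp_potential \<phi> lam selV \<theta> H h (k - 1) hist < 2 * real H / \<delta>"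
  shows "mnorm (Lam \<phi> lam selV hist k h) (thetahat \<phi> lam selV hist k h - \<theta> h)
           \<le> real H * sqrt (real CARD('d) * ln (4 * real H ^ 3 * real K / (lam * \<delta>))) + sqrt lam * B"
proof -
  define D where "D = data \<phi> lam selV hist h (k - 1)"
  have "exp (2 / (real H)\<^sup>2 * potential (real H) lam (\<theta> h) D) < exp (ln (2 * real H / \<delta>))"
    using small H \<delta> by (simp add: exp_potential_def D_def)
  then have "2 / (real H)\<^sup>2 * potential (real H) lam (\<theta> h) D < ln (2 * real H / \<delta>)"
    by (simp only: exp_less_cancel_iff)
  then have "potential (real H) lam (\<theta> h) D \<le> (real H)\<^sup>2 / 2 * ln (2 * real H / \<delta>)"
    using H by (simp add: field_simps)
  moreover have "\<forall>p \<in> set D. norm (fst p) \<le> real H"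
    using norm_data_features_le[OF phi_bound selV] by (simp add: D_def)
  moreover have "length D \<le> K" "1 \<le> K" using k by (auto simp: D_def length_data)
  ultimately have "mnorm (Lam \<phi> lam selV hist k h) (thetahat \<phi> lam selV hist k h - \<theta> h)
      \<le> real H * sqrt (real CARD('d) * ln (4 * real H ^ 3 * real K / (lam * \<delta>))) + sqrt lam * norm (\<theta> h)"
    using ridge_error_le_of_potential[of "real H" lam \<delta> K D "\<theta> h"] H lam \<delta>
    by (simp add: Lam_def thetahat_def D_def)
  also have "\<dots> \<le> real H * sqrt (real CARD('d) * ln (4 * real H ^ 3 * real K / (lam * \<delta>))) + sqrt lam * B"
    using B lam by (intro add_left_mono mult_left_mono) auto
  finally show ?thesis .
qed

lemma prob_exp_potential_exceeds_some_step:
  fixes \<phi> :: "'s::finite \<Rightarrow> 'a \<Rightarrow> 's \<Rightarrow> real^'d" and \<theta> :: "nat \<Rightarrow> real^'d"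
  assumes H: "H \<noteq> 0" and lam: "0 < lam" and \<delta>: "0 < \<delta>"
    and nonneg: "\<forall>h\<in>{1..H}. \<forall>s a s'. 0 \<le> \<theta> h \<bullet> \<phi> s a s'"
    and sum1: "\<forall>h\<in>{1..H}. \<forall>s a. (\<Sum>s'\<in>UNIV. \<theta> h \<bullet> \<phi> s a s') = 1"
    and selV: "\<And>k h L s a. selV k h L s a \<in> Vset H"
  shows "measure_pmf.prob (run \<theta> \<phi> H lam \<beta> selV selA s1 K)
           {hist. \<exists>h\<in>{1..H}. \<exists>m \<le> K. 2 * real H / \<delta> \<le> exp_potential \<phi> lam selV \<theta> H h m hist}
         \<le> \<delta> / 2"
proof -
  let ?R = "run \<theta> \<phi> H lam \<beta> selV selA s1 K"
  define exceeds where
    "exceeds h = {hist. \<exists>m \<le> K. 2 * real H / \<delta> \<le> exp_potential \<phi> lam selV \<theta> H h m hist}" for h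
  have union: "{hist. \<exists>h\<in>{1..H}. \<exists>m \<le> K. 2 * real H / \<delta> \<le> exp_potential \<phi> lam selV \<theta> H h m hist}
      = (\<Union>h\<in>{1..H}. exceeds h)"
    by (auto simp: exceeds_def)
  have "measure_pmf.prob ?R (\<Union>h\<in>{1..H}. exceeds h) \<le> (\<Sum>h\<in>{1..H}. measure_pmf.prob ?R (exceeds h))"
    by (rule measure_pmf.finite_measure_subadditive_finite) auto
  also have "\<dots> \<le> (\<Sum>h\<in>{1..H}. 1 / (2 * real H / \<delta>))"
  proof (rule sum_mono)
    fix h assume h: "h \<in> {1..H}"
    show "measure_pmf.prob ?R (exceeds h) \<le> 1 / (2 * real H / \<delta>)"
      unfolding exceeds_def
      by (rule prob_exp_potential_exceeds) (use h H \<delta> lam nonneg sum1 selV in auto)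
  qed
  finally show ?thesis unfolding union using H by simp
qed

theorem lemma4:
  fixes \<phi> :: "'s::finite \<Rightarrow> 'a::finite \<Rightarrow> 's \<Rightarrow> real^'d"
    and \<theta> :: "nat \<Rightarrow> real^'d"
    and B \<delta> lam \<beta> :: real and H K :: nat and s1 :: 's
    and selV :: "nat \<Rightarrow> nat \<Rightarrow> real^'d^'d \<Rightarrow> 's \<Rightarrow> 'a \<Rightarrow> ('s \<Rightarrow> real)"
    and selA :: "nat \<Rightarrow> nat \<Rightarrow> ('a \<Rightarrow> real) \<Rightarrow> 'a"
  assumes phi_bound: "\<forall>s a V. (\<forall>s'. 0 \<le> V s' \<and> V s' \<le> 1) \<longrightarrow> norm (feat \<phi> s a V) \<le> 1"
    and theta_bound: "\<forall>h\<in>{1..H}. norm (\<theta> h) \<le> B"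
    and P_nonneg: "\<forall>h\<in>{1..H}. \<forall>s a s'. 0 \<le> \<theta> h \<bullet> \<phi> s a s'"
    and P_sum: "\<forall>h\<in>{1..H}. \<forall>s a. (\<Sum>s'\<in>UNIV. \<theta> h \<bullet> \<phi> s a s') = 1"
    and delta_pos: "0 < \<delta>" and delta_lt1: "\<delta> < 1"
    and lam_def: "lam = 1 / B\<^sup>2"
    and beta_def: "\<beta> = real H * sqrt (real CARD('d) * ln (4 * real H ^ 3 * real K / (lam * \<delta>)))
                        + sqrt lam * B"
    and selV_argmax: "\<forall>k h L s a. selV k h L s a \<in> Vset H \<and>
         (\<forall>V\<in>Vset H. mnorm (matrix_inv L) (feat \<phi> s a V)
                       \<le> mnorm (matrix_inv L) (feat \<phi> s a (selV k h L s a)))"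
    and selA_argmax: "\<forall>k h q. q (selA k h q) = Max (range q)"
  shows "measure_pmf.prob (run \<theta> \<phi> H lam \<beta> selV selA s1 K)
           {hist. \<forall>k\<in>{1..K}. \<forall>h\<in>{1..H}.
              mnorm (Lam \<phi> lam selV hist k h) (thetahat \<phi> lam selV hist k h - \<theta> h) \<le> \<beta>}
         \<ge> 1 - \<delta> / 2"
proof (cases "H = 0")
  case True
  then show ?thesis using delta_pos by (simp add: measure_pmf.prob_space)
next
  case False
  let ?R = "run \<theta> \<phi> H lam \<beta> selV selA s1 K"
  define Bad where "Bad = {hist. \<exists>h\<in>{1..H}. \<exists>m \<le> K.
                              2 * real H / \<delta> \<le> exp_potential \<phi> lam selV \<theta> H h m hist}"
  have selV: "\<And>k h L s a. selV k h L s a \<in> Vset H" using selV_argmax by blast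
  have "1 \<le> B" using norm_param_ge_one[OF phi_bound] P_sum theta_bound False by force
  then have lam: "0 < lam" "lam \<le> 1" by (simp_all add: lam_def one_le_power)
  have "measure_pmf.prob ?R Bad \<le> \<delta> / 2"
    unfolding Bad_def
    by (rule prob_exp_potential_exceeds_some_step) (use False lam delta_pos P_nonneg P_sum selV in auto)
  then have "1 - \<delta> / 2 \<le> measure_pmf.prob ?R (UNIV - Bad)"
    using measure_pmf.prob_compl[of Bad ?R] by simp
  also have "\<dots> \<le> measure_pmf.prob ?R {hist. \<forall>k\<in>{1..K}. \<forall>h\<in>{1..H}.
      mnorm (Lam \<phi> lam selV hist k h) (thetahat \<phi> lam selV hist k h - \<theta> h) \<le> \<beta>}"
  proof (rule measure_pmf.finite_measure_mono, safe)
    fix hist k h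
    assume "hist \<notin> Bad" and k: "k \<in> {1..K}" and h: "h \<in> {1..H}"
    moreover have "k - 1 \<le> K" using k by auto
    ultimately have "\<not> 2 * real H / \<delta> \<le> exp_potential \<phi> lam selV \<theta> H h (k - 1) hist"
      unfolding Bad_def by blast
    then have small: "exp_potential \<phi> lam selV \<theta> H h (k - 1) hist < 2 * real H / \<delta>"
      by simp
    show "mnorm (Lam \<phi> lam selV hist k h) (thetahat \<phi> lam selV hist k h - \<theta> h) \<le> \<beta>"
      unfolding beta_def
      by (rule estimation_error_le_of_exp_potential[OF phi_bound selV _ lam delta_pos delta_lt1 k _ small])
        (use theta_bound h False in auto)
  qed simp
  finally show ?thesis by simp
qed

end
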